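(* For a poset $P$ on $\{1,2,\ldots,n\}$ and field $k$, the following are equivalent: (i) $I^{\mathfrak{gr}}_P=I_P$ and $\mathfrak{gr}(R_P)\cong R_P$; (ii) the toric ideal $I_P=\ker(\varphi:S\to R_P)$ is homogeneous for the standard $\mathbb{N}$-grading of $S$ in which each $U_J$ has degree one; (iii) every pair $\{J_1,J_2\}$ of connected order ideals of $P$ that intersects nontrivially has $J_1\cap J_2$ connected.
   Context: All posets are finite. A weak $P$-partition is $f:\{1,\ldots,n\}\to\mathbb{N}$ with $f(i)\ge f(j)$ whenever $i<_Pj$; $R_P\subseteq k[x_1,\ldots,x_n]$ is the span of $\mathbf{x}^f=\prod_ix_i^{f(i)}$ over weak $P$-partitions; $\mathfrak{m}$ is spanned by the $\mathbf{x}^f$ with $f\ne0$; $\mathfrak{gr}(R_P)=\bigoplus_i\mathfrak{m}^i/\mathfrak{m}^{i+1}$. A connected order ideal is a nonempty downward-closed subset whose induced Hasse diagram is connected; $\mathcal{J}_{\mathrm{conn}}(P)$ is the set of these; two of them intersect nontrivially if neither disjoint nor nested; $\Pi(P)$ is the set of such pairs. $S=k[U_J]_{J\in\mathcal{J}_{\mathrm{conn}}(P)}$; $\varphi:S\to R_P$, $U_J\mapsto\prod_{j\in J}x_j$, and $\mathfrak{gr}(\varphi):S\to\mathfrak{gr}(R_P)$ sends $U_J$ to the class of $\prod_{j\in J}x_j$ in $\mathfrak{m}/\mathfrak{m}^2$. $I_P=\ker\varphi$ is generated by $U_{J_1}U_{J_2}-U_{J_1\cup J_2}U_{J^{(1)}}\cdots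 U_{J^{(t)}}$ ($\{J_1,J_2\}\in\Pi(P)$, $J^{(1)},\ldots,J^{(t)}$ the connected components of $J_1\cap J_2$), and $I^{\mathfrak{gr}}_P=\ker\mathfrak{gr}(\varphi)$ is generated by $U_{J_1}U_{J_2}-U_{J_1\cup J_2}U_{J_1\cap J_2}$ when $J_1\cap J_2$ is connected and $U_{J_1}U_{J_2}$ when disconnected, over $\{J_1,J_2\}\in\Pi(P)$. *)

theory Defs
  imports "HOL-Library.Poly_Mapping" "HOL-Algebra.QuotRing"
begin

text \<open>A poset on {1..n} is a relation R with partial_order_on {1..n} R;
  (i,j) in R means i <=_P j.\<close>

definition strict_le :: "nat rel \<Rightarrow> nat \<Rightarrow> nat \<Rightarrow> bool" where
  "strict_le R i j \<longleftrightarrow> (i, j) \<in> R \<and> i \<noteq> j"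

definition covers_in :: "nat rel \<Rightarrow> nat set \<Rightarrow> nat \<Rightarrow> nat \<Rightarrow> bool" where
  "covers_in R J i j \<longleftrightarrow> i \<in> J \<and> j \<in> J \<and> strict_le R i j \<and>
     \<not> (\<exists>k\<in>J. strict_le R i k \<and> strict_le R k j)"

definition hasse_edges :: "nat rel \<Rightarrow> nat set \<Rightarrow> nat rel" where
  "hasse_edges R J = {(i, j). covers_in R J i j \<or> covers_in R J j i}"

definition hasse_connected :: "nat rel \<Rightarrow> nat set \<Rightarrow> bool" where
  "hasse_connected R J \<longleftrightarrow> (\<forall>a\<in>J. \<forall>b\<in>J. (a, b) \<in> (hasse_edges R J)\<^sup>*)"

definition order_ideal :: "nat \<Rightarrow> nat rel \<Rightarrow> nat set \<Rightarrow> bool" where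
  "order_ideal n R J \<longleftrightarrow> J \<subseteq> {1..n} \<and> (\<forall>i j. j \<in> J \<and> (i, j) \<in> R \<longrightarrow> i \<in> J)"

definition J_conn :: "nat \<Rightarrow> nat rel \<Rightarrow> nat set set" where
  "J_conn n R = {J. J \<noteq> {} \<and> order_ideal n R J \<and> hasse_connected R J}"

definition intersect_nontrivially :: "nat set \<Rightarrow> nat set \<Rightarrow> bool" where
  "intersect_nontrivially J1 J2 \<longleftrightarrow> J1 \<inter> J2 \<noteq> {} \<and> \<not> J1 \<subseteq> J2 \<and> \<not> J2 \<subseteq> J1"

definition Pi_pairs :: "nat \<Rightarrow> nat rel \<Rightarrow> nat set set set" where
  "Pi_pairs n R = {{J1, J2} | J1 J2. J1 \<in> J_conn n R \<and> J2 \<in> J_conn n R \<and> intersect_nontrivially J1 J2}"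

type_synonym ('v, 'k) mpoly = "('v \<Rightarrow>\<^sub>0 nat) \<Rightarrow>\<^sub>0 'k"

definition pconst :: "'k::zero \<Rightarrow> ('v, 'k) mpoly" where
  "pconst c = Poly_Mapping.single 0 c"

definition pvar :: "'v \<Rightarrow> ('v, 'k::{zero,one}) mpoly" where
  "pvar v = Poly_Mapping.single (Poly_Mapping.single v 1) 1"

definition pmonom :: "('v \<Rightarrow>\<^sub>0 nat) \<Rightarrow> ('v, 'k::{zero,one}) mpoly" where
  "pmonom f = Poly_Mapping.single f 1"

definition mdeg :: "('v \<Rightarrow>\<^sub>0 nat) \<Rightarrow> nat" where
  "mdeg m = (\<Sum>v\<in>Poly_Mapping.keys m. Poly_Mapping.lookup m v)"

definition hom_comp :: "nat \<Rightarrow> ('v, 'k::comm_ring_1) mpoly \<Rightarrow> ('v, 'k) mpoly" where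
  "hom_comp d g = (\<Sum>m\<in>{m \<in> Poly_Mapping.keys g. mdeg m = d}. Poly_Mapping.single m (Poly_Mapping.lookup g m))"

definition homogeneous_ideal :: "('v, 'k::comm_ring_1) mpoly set \<Rightarrow> bool" where
  "homogeneous_ideal I \<longleftrightarrow> (\<forall>g\<in>I. \<forall>d. hom_comp d g \<in> I)"

definition peval :: "('v \<Rightarrow> ('w, 'k::comm_ring_1) mpoly) \<Rightarrow> ('v, 'k) mpoly \<Rightarrow> ('w, 'k) mpoly" where
  "peval a g = (\<Sum>m\<in>Poly_Mapping.keys g. pconst (Poly_Mapping.lookup g m) * (\<Prod>v\<in>Poly_Mapping.keys m. a v ^ Poly_Mapping.lookup m v))"

definition kspan :: "('w, 'k::comm_ring_1) mpoly set \<Rightarrow> ('w, 'k) mpoly set" where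
  "kspan X = {p. \<exists>F c. finite F \<and> F \<subseteq> X \<and> p = (\<Sum>q\<in>F. pconst (c q) * q)}"

definition set_prod :: "('w, 'k::comm_ring_1) mpoly set \<Rightarrow> ('w, 'k) mpoly set \<Rightarrow> ('w, 'k) mpoly set" where
  "set_prod A B = {sum_list (map (\<lambda>(a, b). a * b) xs) | xs. set xs \<subseteq> A \<times> B}"

definition weak_P_partition :: "nat \<Rightarrow> nat rel \<Rightarrow> (nat \<Rightarrow>\<^sub>0 nat) \<Rightarrow> bool" where
  "weak_P_partition n R f \<longleftrightarrow> Poly_Mapping.keys f \<subseteq> {1..n} \<and>
     (\<forall>i j. strict_le R i j \<longrightarrow> Poly_Mapping.lookup f i \<ge> Poly_Mapping.lookup f j)"

definition R_P :: "nat \<Rightarrow> nat rel \<Rightarrow> (nat, 'k::comm_ring_1) mpoly set" where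
  "R_P n R = kspan {pmonom f | f. weak_P_partition n R f}"

definition max_ideal :: "nat \<Rightarrow> nat rel \<Rightarrow> (nat, 'k::comm_ring_1) mpoly set" where
  "max_ideal n R = kspan {pmonom f | f. weak_P_partition n R f \<and> f \<noteq> 0}"

fun mpow :: "nat \<Rightarrow> nat rel \<Rightarrow> nat \<Rightarrow> (nat, 'k::comm_ring_1) mpoly set" where
  "mpow n R 0 = R_P n R"
| "mpow n R (Suc i) = set_prod (max_ideal n R) (mpow n R i)"

definition R_P_ring :: "nat \<Rightarrow> nat rel \<Rightarrow> (nat, 'k::comm_ring_1) mpoly ring" where
  "R_P_ring n R = \<lparr>carrier = R_P n R, monoid.mult = (*), one = 1, zero = 0, add = (+)\<rparr>"

text \<open>Elements of gr = direct sum of M i / M (Suc i): a coset in each degree, almost all zero.\<close>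
definition gcos :: "(nat \<Rightarrow> ('w, 'k::comm_ring_1) mpoly set) \<Rightarrow> nat \<Rightarrow> ('w, 'k) mpoly \<Rightarrow> ('w, 'k) mpoly set" where
  "gcos M i a = {a + b | b. b \<in> M (Suc i)}"

definition grep :: "('w, 'k::comm_ring_1) mpoly set \<Rightarrow> ('w, 'k) mpoly" where
  "grep A = (SOME a. a \<in> A)"

definition gr_ring :: "(nat \<Rightarrow> ('w, 'k::comm_ring_1) mpoly set) \<Rightarrow> (nat \<Rightarrow> ('w, 'k) mpoly set) ring" where
  "gr_ring M = \<lparr>carrier = {F. (\<forall>i. \<exists>a\<in>M i. F i = gcos M i a) \<and> finite {i. F i \<noteq> gcos M i 0}},
     monoid.mult = (\<lambda>F G. \<lambda>d. gcos M d (\<Sum>i\<le>d. grep (F i) * grep (G (d - i)))),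
     one = (\<lambda>i. gcos M i (if i = 0 then 1 else 0)),
     zero = (\<lambda>i. gcos M i 0),
     add = (\<lambda>F G. \<lambda>i. gcos M i (grep (F i) + grep (G i)))\<rparr>"

definition gr_const :: "(nat \<Rightarrow> ('w, 'k::comm_ring_1) mpoly set) \<Rightarrow> 'k \<Rightarrow> (nat \<Rightarrow> ('w, 'k) mpoly set)" where
  "gr_const M c = (\<lambda>i. gcos M i (if i = 0 then pconst c else 0))"

definition grR_P :: "nat \<Rightarrow> nat rel \<Rightarrow> (nat \<Rightarrow> (nat, 'k::comm_ring_1) mpoly set) ring" where
  "grR_P n R = gr_ring (mpow n R)"

text \<open>S = k[U_J], J \<in> J_conn: polynomials in variables indexed by nat sets, using only
  variables from J_conn.\<close>
definition S_ring :: "nat \<Rightarrow> nat rel \<Rightarrow> (nat set, 'k::comm_ring_1) mpoly set" where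
  "S_ring n R = {g. \<forall>m\<in>Poly_Mapping.keys g. Poly_Mapping.keys m \<subseteq> J_conn n R}"

definition xJ :: "nat set \<Rightarrow> (nat, 'k::comm_ring_1) mpoly" where
  "xJ J = (\<Prod>j\<in>J. pvar j)"

definition phi :: "(nat set, 'k::comm_ring_1) mpoly \<Rightarrow> (nat, 'k) mpoly" where
  "phi g = peval xJ g"

definition I_P :: "nat \<Rightarrow> nat rel \<Rightarrow> (nat set, 'k::comm_ring_1) mpoly set" where
  "I_P n R = {g \<in> S_ring n R. phi g = 0}"

text \<open>gr(phi): S \<rightarrow> gr(R_P), the k-algebra map with U_J \<mapsto> class of x^J in m/m^2;
  a form of degree d goes to the class of its image in m^d/m^(d+1).\<close>
definition gr_phi :: "nat \<Rightarrow> nat rel \<Rightarrow> (nat set, 'k::comm_ring_1) mpoly \<Rightarrow> (nat \<Rightarrow> (nat, 'k) mpoly set)" where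
  "gr_phi n R g = (\<lambda>d. gcos (mpow n R) d (phi (hom_comp d g)))"

definition I_gr_P :: "nat \<Rightarrow> nat rel \<Rightarrow> (nat set, 'k::comm_ring_1) mpoly set" where
  "I_gr_P n R = {g \<in> S_ring n R. gr_phi n R g = \<zero>\<^bsub>grR_P n R\<^esub>}"

definition gr_iso_R_P :: "nat \<Rightarrow> nat rel \<Rightarrow> 'k::comm_ring_1 itself \<Rightarrow> bool" where
  "gr_iso_R_P n R _ \<longleftrightarrow> (\<exists>h. h \<in> ring_iso (grR_P n R) (R_P_ring n R :: (nat, 'k) mpoly ring) \<and>
      (\<forall>c::'k. h (gr_const (mpow n R) c) = pconst c))"

end

theory Submission
  imports Defs
begin

text \<open>Let \<open>w\<close> be the weight on \<open>P\<close> with \<open>\<Sum>u \<le> v. w u = 1\<close> for every \<open>v\<close>. If every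
  nontrivially intersecting pair of connected order ideals has connected intersection, then,
  removing a maximal element and comparing with its principal ideal by inclusion-exclusion, the
  weight of any order ideal equals its number of connected components; in particular every
  connected ideal has weight one. The weighted degree of \<open>x\<^sup>f\<close> is then a grading of \<open>R_P\<close>
  for which \<open>\<phi>\<close> preserves degrees, so \<open>I_P\<close> is homogeneous, \<open>m\<^sup>d\<close> is spanned by
  the monomials of weighted degree at least \<open>d\<close>, \<open>gr(R_P) \<cong> R_P\<close> and \<open>I\<^sup>g\<^sup>r\<^sub>P = I_P\<close>.
  Conversely, if \<open>J\<^sub>1 \<inter> J\<^sub>2\<close> has components \<open>D\<^sub>1, \<dots>, D\<^sub>t\<close> with \<open>t \<ge> 2\<close>, the binomial
  \<open>U\<^sub>J\<^sub>1 U\<^sub>J\<^sub>2 - U\<^sub>J\<^sub>1\<^sub>\<union>\<^sub>J\<^sub>2 U\<^sub>D\<^sub>1 \<cdots> U\<^sub>D\<^sub>t\<close> lies in \<open>I_P\<close> but has terms of degrees 2 and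
  \<open>t + 1\<close>; and \<open>I\<^sup>g\<^sup>r\<^sub>P\<close> is always homogeneous.\<close>

section \<open>Connected components of induced Hasse diagrams\<close>

definition down_closed :: "nat rel \<Rightarrow> nat set \<Rightarrow> bool" where
  "down_closed R K \<longleftrightarrow> (\<forall>i j. j \<in> K \<and> (i, j) \<in> R \<longrightarrow> i \<in> K)"

definition down_set :: "nat rel \<Rightarrow> nat \<Rightarrow> nat set" where
  "down_set R v = {u. (u, v) \<in> R}"

definition hasse_component :: "nat rel \<Rightarrow> nat set \<Rightarrow> nat \<Rightarrow> nat set" where
  "hasse_component R K x = {y \<in> K. (x, y) \<in> (hasse_edges R K)\<^sup>*}"

definition hasse_components :: "nat rel \<Rightarrow> nat set \<Rightarrow> nat set set" where
  "hasse_components R K = hasse_component R K ` K"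

lemma partial_order_onD:
  assumes "partial_order_on {1..n} R"
  shows "trans R" "antisym R" "\<And>x. x \<in> {1..n} \<Longrightarrow> (x, x) \<in> R"
  using assms unfolding partial_order_on_def preorder_on_def refl_on_def by auto

lemma order_ideal_down_closed: "order_ideal n R K \<Longrightarrow> down_closed R K"
  unfolding order_ideal_def down_closed_def by blast

lemma order_ideal_subset: "order_ideal n R K \<Longrightarrow> K \<subseteq> {1..n}"
  unfolding order_ideal_def by auto

lemma order_ideal_finite: "order_ideal n R K \<Longrightarrow> finite K"
  using order_ideal_subset by (rule finite_subset) auto

lemma hasse_edgesD: "(a, b) \<in> hasse_edges R K \<Longrightarrow> a \<in> K \<and> b \<in> K"
  unfolding hasse_edges_def covers_in_def by auto

lemma hasse_edges_sym: "(a, b) \<in> hasse_edges R K \<Longrightarrow> (b, a) \<in> hasse_edges R K"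
  unfolding hasse_edges_def by auto

lemma hasse_path_sym:
  assumes "(a, b) \<in> (hasse_edges R K)\<^sup>*" shows "(b, a) \<in> (hasse_edges R K)\<^sup>*"
  using assms
  by (induction rule: rtrancl_induct) (auto intro: converse_rtrancl_into_rtrancl hasse_edges_sym)

lemma hasse_path_in:
  assumes "(a, b) \<in> (hasse_edges R K)\<^sup>*" "a \<in> K" shows "b \<in> K"
  using assms by (induction rule: rtrancl_induct) (auto dest: hasse_edgesD)

lemma hasse_edges_mono:
  assumes "down_closed R K1" "K1 \<subseteq> K2" "(a, b) \<in> hasse_edges R K1"
  shows "(a, b) \<in> hasse_edges R K2"
proof -
  have "covers_in R K2 i j" if "covers_in R K1 i j" for i j
    using that assms(1,2) unfolding covers_in_def strict_le_def down_closed_def by blast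
  then show ?thesis using assms(3) unfolding hasse_edges_def by auto
qed

lemma hasse_path_mono:
  assumes "down_closed R K1" "K1 \<subseteq> K2" "(a, b) \<in> (hasse_edges R K1)\<^sup>*"
  shows "(a, b) \<in> (hasse_edges R K2)\<^sup>*"
  using assms(3) by (induction rule: rtrancl_induct)
    (auto intro: rtrancl_into_rtrancl hasse_edges_mono[OF assms(1,2)])

lemma hasse_edges_restrict:
  assumes "C \<subseteq> K" "(a, b) \<in> hasse_edges R K" "a \<in> C" "b \<in> C"
  shows "(a, b) \<in> hasse_edges R C"
  using assms unfolding hasse_edges_def covers_in_def by blast

lemma hasse_connected_path:
  assumes "down_closed R D" "D \<subseteq> K" "hasse_connected R D" "x \<in> D" "y \<in> D"
  shows "(x, y) \<in> (hasse_edges R K)\<^sup>*"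
  using assms hasse_path_mono unfolding hasse_connected_def by blast

text \<open>Comparable elements are joined by a saturated chain, found by inserting elements
  strictly between them until only cover relations remain.\<close>
lemma comparable_hasse_path:
  assumes "trans R" "antisym R" "finite K" "\<forall>x\<in>K. (x, x) \<in> R"
  shows "u \<in> K \<Longrightarrow> v \<in> K \<Longrightarrow> (u, v) \<in> R \<Longrightarrow> (u, v) \<in> (hasse_edges R K)\<^sup>*"
proof (induction "card {k\<in>K. (u, k) \<in> R \<and> (k, v) \<in> R}" arbitrary: u v rule: less_induct)
  case (less u v)
  let ?I = "\<lambda>u v. {k\<in>K. (u, k) \<in> R \<and> (k, v) \<in> R}"
  show ?case
  proof (cases "u = v \<or> covers_in R K u v")
    case True then show ?thesis unfolding hasse_edges_def by auto
  next
    case False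
    then obtain k where k: "k \<in> K" "(u, k) \<in> R" "(k, v) \<in> R" "u \<noteq> k" "k \<noteq> v"
      using less.prems unfolding covers_in_def strict_le_def by blast
    have fin: "finite (?I u v)" using assms(3) by auto
    have "?I u k \<subset> ?I u v"
      using k less.prems assms(1,2,4) by (auto elim: transE dest: antisymD)
    then have "(u, k) \<in> (hasse_edges R K)\<^sup>*"
      using less.hyps[OF psubset_card_mono[OF fin]] less.prems k by blast
    moreover have "?I k v \<subset> ?I u v"
      using k less.prems assms(1,2,4) by (auto elim: transE dest: antisymD)
    then have "(k, v) \<in> (hasse_edges R K)\<^sup>*"
      using less.hyps[OF psubset_card_mono[OF fin]] less.prems k by blast
    ultimately show ?thesis by simp
  qed
qed

lemma hasse_component_self: "x \<in> K \<Longrightarrow> x \<in> hasse_component R K x"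
  unfolding hasse_component_def by auto

lemma hasse_component_subset: "hasse_component R K x \<subseteq> K"
  unfolding hasse_component_def by auto

lemma hasse_component_eq:
  assumes "y \<in> hasse_component R K x" shows "hasse_component R K y = hasse_component R K x"
proof -
  have xy: "(x, y) \<in> (hasse_edges R K)\<^sup>*" using assms unfolding hasse_component_def by auto
  show ?thesis unfolding hasse_component_def
    using rtrancl_trans[OF xy] rtrancl_trans[OF hasse_path_sym[OF xy]] by auto
qed

lemma hasse_components_disjoint:
  assumes "C1 \<in> hasse_components R K" "C2 \<in> hasse_components R K" "C1 \<inter> C2 \<noteq> {}"
  shows "C1 = C2"
proof -
  obtain x1 x2 where "C1 = hasse_component R K x1" "C2 = hasse_component R K x2"
    using assms(1,2) unfolding hasse_components_def by auto
  then show ?thesis using assms(3) hasse_component_eq by (metis disjoint_iff)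
qed

lemma Union_hasse_components: "\<Union>(hasse_components R K) = K"
  unfolding hasse_components_def using hasse_component_self hasse_component_subset by fastforce

lemma finite_hasse_components: "finite K \<Longrightarrow> finite (hasse_components R K)"
  unfolding hasse_components_def by auto

lemma hasse_components_nonempty: "C \<in> hasse_components R K \<Longrightarrow> C \<noteq> {}"
  unfolding hasse_components_def using hasse_component_self by fastforce

lemma hasse_components_subset: "C \<in> hasse_components R K \<Longrightarrow> C \<subseteq> K"
  unfolding hasse_components_def using hasse_component_subset by fastforce

lemma hasse_path_in_component:
  assumes "b \<in> hasse_component R K a"
  shows "(a, b) \<in> (hasse_edges R (hasse_component R K a))\<^sup>*"
proof -
  let ?C = "hasse_component R K a"
  have ab: "(a, b) \<in> (hasse_edges R K)\<^sup>*" using assms unfolding hasse_component_def by auto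
  have "a \<in> K" using hasse_path_in[OF hasse_path_sym[OF ab]] assms hasse_component_subset by blast
  have "(a, y) \<in> (hasse_edges R ?C)\<^sup>* \<and> y \<in> ?C" if "(a, y) \<in> (hasse_edges R K)\<^sup>*" for y
    using that
  proof (induction rule: rtrancl_induct)
    case base then show ?case using \<open>a \<in> K\<close> hasse_component_self by auto
  next
    case (step y z)
    have "z \<in> ?C"
      using rtrancl_into_rtrancl[OF step(1,2)] hasse_edgesD[OF step(2)]
      unfolding hasse_component_def by auto
    then have "(y, z) \<in> hasse_edges R ?C"
      using hasse_edges_restrict[OF hasse_component_subset] step by blast
    then show ?case using step \<open>z \<in> ?C\<close> by (auto intro: rtrancl_into_rtrancl)
  qed
  then show ?thesis using ab by auto
qed

lemma hasse_connected_component: "C \<in> hasse_components R K \<Longrightarrow> hasse_connected R C"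
  unfolding hasse_connected_def hasse_components_def
proof (intro ballI)
  fix a b assume "C \<in> hasse_component R K ` K" "a \<in> C" "b \<in> C"
  then have "C = hasse_component R K a" using hasse_component_eq by blast
  then show "(a, b) \<in> (hasse_edges R C)\<^sup>*" using hasse_path_in_component \<open>b \<in> C\<close> by metis
qed

lemma hasse_components_connected:
  assumes "hasse_connected R K" "K \<noteq> {}" shows "hasse_components R K = {K}"
proof -
  have "hasse_component R K x = K" if "x \<in> K" for x
    using assms that unfolding hasse_connected_def hasse_component_def by auto
  then show ?thesis unfolding hasse_components_def using assms(2) by auto
qed

lemma hasse_connected_if_card_components_le_1:
  assumes "K \<noteq> {}" "finite K" "card (hasse_components R K) \<le> 1"
  shows "hasse_connected R K"
proof -
  have "hasse_components R K \<noteq> {}" using assms(1) Union_hasse_components[of R K] by auto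
  then have "card (hasse_components R K) = 1"
    using finite_hasse_components[OF assms(2)] assms(3) by (simp add: le_Suc_eq)
  then obtain C where "hasse_components R K = {C}" by (rule card_1_singletonE)
  moreover then have "C = K" using Union_hasse_components[of R K] by auto
  ultimately show ?thesis using hasse_connected_component by blast
qed

lemma sum_hasse_components:
  assumes "finite K"
  shows "sum f K = (\<Sum>C\<in>hasse_components R K. sum f C)"
proof -
  have "\<forall>C\<in>hasse_components R K. finite C"
    using finite_subset[OF hasse_components_subset assms] by blast
  moreover have "\<forall>A\<in>hasse_components R K. \<forall>B\<in>hasse_components R K. A \<noteq> B \<longrightarrow> A \<inter> B = {}"
    using hasse_components_disjoint by blast
  ultimately show ?thesis
    using sum.Union_disjoint[of "hasse_components R K" f] by (simp add: Union_hasse_components)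
qed

lemma down_closed_hasse_component:
  assumes po: "partial_order_on {1..n} R" and K: "order_ideal n R K"
    and C: "C \<in> hasse_components R K"
  shows "down_closed R C"
  unfolding down_closed_def
proof (intro allI impI)
  fix i j assume h: "j \<in> C \<and> (i, j) \<in> R"
  obtain x where Cx: "C = hasse_component R K x" using C unfolding hasse_components_def by auto
  have jK: "j \<in> K" using h Cx hasse_component_subset by auto
  have iK: "i \<in> K" using order_ideal_down_closed[OF K] h jK unfolding down_closed_def by blast
  have "(i, j) \<in> (hasse_edges R K)\<^sup>*"
    using comparable_hasse_path[OF partial_order_onD(1,2)[OF po] order_ideal_finite[OF K] _ iK jK] h
      partial_order_onD(3)[OF po] order_ideal_subset[OF K] by blast
  then have "(x, i) \<in> (hasse_edges R K)\<^sup>*"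
    using h Cx hasse_path_sym unfolding hasse_component_def by (blast intro: rtrancl_trans)
  then show "i \<in> C" using Cx iK unfolding hasse_component_def by auto
qed

lemma hasse_component_upward_closed:
  assumes po: "partial_order_on {1..n} R" and K: "order_ideal n R K"
    and ij: "i \<in> hasse_component R K a" "j \<in> K" "(i, j) \<in> R"
  shows "j \<in> hasse_component R K a"
proof -
  have "i \<in> K" using ij(1) hasse_component_subset by blast
  then have "(i, j) \<in> (hasse_edges R K)\<^sup>*"
    using comparable_hasse_path[OF partial_order_onD(1,2)[OF po] order_ideal_finite[OF K]] ij(2,3)
      partial_order_onD(3)[OF po] order_ideal_subset[OF K] by blast
  then show ?thesis using ij(1,2) unfolding hasse_component_def by (auto intro: rtrancl_trans)
qed

lemma hasse_component_in_J_conn: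
  assumes po: "partial_order_on {1..n} R" and K: "order_ideal n R K"
    and C: "C \<in> hasse_components R K"
  shows "C \<in> J_conn n R"
  using down_closed_hasse_component[OF assms] hasse_components_subset[OF C]
    order_ideal_subset[OF K] hasse_connected_component[OF C] hasse_components_nonempty[OF C]
  unfolding J_conn_def order_ideal_def down_closed_def by blast

lemma order_ideal_remove_maximal:
  assumes "order_ideal n R K" "\<forall>y\<in>K. (v, y) \<in> R \<longrightarrow> y = v"
  shows "order_ideal n R (K - {v})"
  using assms unfolding order_ideal_def by blast

lemma down_set_self:
  assumes po: "partial_order_on {1..n} R" and K: "order_ideal n R K" and v: "v \<in> K"
  shows "v \<in> down_set R v"
  using partial_order_onD(3)[OF po] order_ideal_subset[OF K] v unfolding down_set_def by auto

lemma down_set_in_J_conn: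
  assumes po: "partial_order_on {1..n} R" and K: "order_ideal n R K" and v: "v \<in> K"
  shows "down_set R v \<in> J_conn n R" "down_set R v \<subseteq> K"
proof -
  show sub: "down_set R v \<subseteq> K" using K v unfolding order_ideal_def down_set_def by auto
  have Kn: "K \<subseteq> {1..n}" using order_ideal_subset[OF K] .
  have tr: "trans R" and an: "antisym R" using partial_order_onD[OF po] by auto
  have fin: "finite (down_set R v)" using finite_subset[OF sub order_ideal_finite[OF K]] .
  have refl: "\<forall>x\<in>down_set R v. (x, x) \<in> R" using sub Kn partial_order_onD(3)[OF po] by auto
  have vv: "v \<in> down_set R v" using refl sub v Kn partial_order_onD(3)[OF po]
    unfolding down_set_def by auto
  have "order_ideal n R (down_set R v)"
    using sub Kn tr unfolding order_ideal_def down_set_def trans_def by blast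
  moreover have to_v: "(a, v) \<in> (hasse_edges R (down_set R v))\<^sup>*" if "a \<in> down_set R v" for a
    using comparable_hasse_path[OF tr an fin refl that vv] that unfolding down_set_def by simp
  have "hasse_connected R (down_set R v)"
    unfolding hasse_connected_def using rtrancl_trans[OF to_v hasse_path_sym[OF to_v]] by blast
  ultimately show "down_set R v \<in> J_conn n R" unfolding J_conn_def using vv by auto
qed

lemma order_ideal_down_set_remove:
  assumes po: "partial_order_on {1..n} R" and K: "order_ideal n R K" and v: "v \<in> K"
  shows "order_ideal n R (down_set R v - {v})"
proof (rule order_ideal_remove_maximal)
  show "order_ideal n R (down_set R v)"
    using down_set_in_J_conn[OF po K v] unfolding J_conn_def by simp
  show "\<forall>y\<in>down_set R v. (v, y) \<in> R \<longrightarrow> y = v"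
    using partial_order_onD(2)[OF po] unfolding down_set_def by (auto dest: antisymD)
qed

lemma union_in_J_conn:
  assumes A: "A \<in> J_conn n R" and C: "C \<in> J_conn n R" and AC: "A \<inter> C \<noteq> {}"
  shows "A \<union> C \<in> J_conn n R"
proof -
  have oA: "order_ideal n R A" and oC: "order_ideal n R C"
    and cA: "hasse_connected R A" and cC: "hasse_connected R C"
    using A C unfolding J_conn_def by auto
  obtain x where x: "x \<in> A" "x \<in> C" using AC by auto
  have to_x: "(a, x) \<in> (hasse_edges R (A \<union> C))\<^sup>*" if "a \<in> A \<union> C" for a
  proof (cases "a \<in> A")
    case True
    then show ?thesis using hasse_connected_path[OF order_ideal_down_closed[OF oA] _ cA] x by blast
  next
    case False
    then show ?thesis
      using that hasse_connected_path[OF order_ideal_down_closed[OF oC] _ cC] x by blast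
  qed
  have "hasse_connected R (A \<union> C)"
    unfolding hasse_connected_def using rtrancl_trans[OF to_x hasse_path_sym[OF to_x]] by blast
  moreover have "order_ideal n R (A \<union> C)" using oA oC unfolding order_ideal_def by blast
  ultimately show ?thesis using x unfolding J_conn_def by auto
qed

section \<open>A weighting that counts connected components\<close>

lemma exists_maximal:
  fixes R :: "nat rel"
  assumes "finite Y" "Y \<noteq> {}" "trans R" "antisym R" "\<forall>x\<in>Y. (x, x) \<in> R"
  shows "\<exists>v\<in>Y. \<forall>y\<in>Y. (v, y) \<in> R \<longrightarrow> y = v"
proof -
  define f where "f y = card (down_set R y \<inter> Y)" for y
  have "Max (f ` Y) \<in> f ` Y" using assms(1,2) by (intro Max_in) auto
  then obtain v where v: "v \<in> Y" "f v = Max (f ` Y)" by auto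
  then have v_max: "f y \<le> f v" if "y \<in> Y" for y using that assms(1) by simp
  have "y = v" if y: "y \<in> Y" "(v, y) \<in> R" for y
  proof (rule ccontr)
    assume "y \<noteq> v"
    then have "down_set R v \<inter> Y \<subset> down_set R y \<inter> Y"
      using y v(1) assms(3,4,5) unfolding down_set_def by (auto elim: transE dest: antisymD)
    then have "f v < f y" unfolding f_def using assms(1) by (intro psubset_card_mono) auto
    then show False using v_max[OF y(1)] by simp
  qed
  then show ?thesis using v(1) by blast
qed

text \<open>Removing a maximal element, one solves the triangular system
  \<open>\<Sum>u \<le> v. w u = 1\<close>; its solution is the Moebius inverse of the constant function 1.\<close>
lemma exists_down_set_weight:
  fixes R :: "nat rel"
  assumes "trans R" "antisym R"
  shows "finite Y \<Longrightarrow> \<forall>v\<in>Y. down_set R v \<subseteq> Y \<Longrightarrow> \<forall>x\<in>Y. (x, x) \<in> R \<Longrightarrow>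
     \<exists>w::nat \<Rightarrow> int. \<forall>v\<in>Y. sum w (down_set R v) = 1"
proof (induction "card Y" arbitrary: Y rule: less_induct)
  case (less Y)
  show ?case
  proof (cases "Y = {}")
    case False
    obtain v where v: "v \<in> Y" "\<forall>y\<in>Y. (v, y) \<in> R \<longrightarrow> y = v"
      using exists_maximal[OF less.prems(1) False assms less.prems(3)] by blast
    have "v \<notin> down_set R u" if "u \<in> Y - {v}" for u
      using v that unfolding down_set_def by auto
    then have closed: "\<forall>u\<in>Y - {v}. down_set R u \<subseteq> Y - {v}" using less.prems(2) by blast
    have "card (Y - {v}) < card Y" using v less.prems(1) by (meson card_Diff1_less)
    moreover have "finite (Y - {v})" "\<forall>x\<in>Y - {v}. (x, x) \<in> R" using less.prems by auto
    ultimately obtain w' :: "nat \<Rightarrow> int" where w': "\<forall>u\<in>Y - {v}. sum w' (down_set R u) = 1"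
      using less.hyps closed by blast
    define w where "w = w'(v := 1 - sum w' (down_set R v - {v}))"
    have "sum w (down_set R u) = 1" if u: "u \<in> Y" for u
    proof (cases "u = v")
      case True
      have "finite (down_set R v)" using less.prems(1,2) v(1) by (meson finite_subset)
      moreover have "v \<in> down_set R v" using less.prems(3) v(1) unfolding down_set_def by auto
      ultimately have "sum w (down_set R v) = w v + sum w' (down_set R v - {v})"
        unfolding w_def by (simp add: sum.remove)
      then show ?thesis using True unfolding w_def by simp
    next
      case False
      then have "v \<notin> down_set R u" using v u unfolding down_set_def by auto
      then have "sum w (down_set R u) = sum w' (down_set R u)"
        unfolding w_def by (intro sum.cong) auto
      then show ?thesis using w' u False by auto
    qed
    then show ?thesis by blast
  qed simp
qed

text \<open>The guard \<open>down_set R v \<subseteq> {1..n}\<close> is needed because \<open>partial_order_on {1..n} R\<close>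
  does not confine \<open>R\<close> to \<open>{1..n}\<close>.\<close>
definition unit_weight :: "nat \<Rightarrow> nat rel \<Rightarrow> (nat \<Rightarrow> int) \<Rightarrow> bool" where
  "unit_weight n R w \<longleftrightarrow> (\<forall>v\<in>{1..n}. down_set R v \<subseteq> {1..n} \<longrightarrow> sum w (down_set R v) = 1)"

lemma exists_unit_weight:
  assumes po: "partial_order_on {1..n} R"
  shows "\<exists>w. unit_weight n R w"
proof -
  define Y where "Y = {v\<in>{1..n}. down_set R v \<subseteq> {1..n}}"
  have "down_set R u \<subseteq> down_set R v" if "u \<in> down_set R v" for u v
    using that partial_order_onD(1)[OF po] unfolding down_set_def by (auto elim: transE)
  then have "\<forall>v\<in>Y. down_set R v \<subseteq> Y" unfolding Y_def by blast
  moreover have "finite Y" "\<forall>x\<in>Y. (x, x) \<in> R"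
    using partial_order_onD(3)[OF po] unfolding Y_def by auto
  ultimately obtain w :: "nat \<Rightarrow> int" where "\<forall>v\<in>Y. sum w (down_set R v) = 1"
    using exists_down_set_weight[OF partial_order_onD(1,2)[OF po]] by blast
  then have "unit_weight n R w" unfolding unit_weight_def Y_def by blast
  then show ?thesis by blast
qed

definition intersections_connected :: "nat \<Rightarrow> nat rel \<Rightarrow> bool" where
  "intersections_connected n R \<longleftrightarrow> (\<forall>A C. A \<in> J_conn n R \<and> C \<in> J_conn n R \<and>
     intersect_nontrivially A C \<longrightarrow> hasse_connected R (A \<inter> C))"

lemma intersections_connected_iff_Pi_pairs:
  "intersections_connected n R \<longleftrightarrow>
     (\<forall>J1 J2. {J1, J2} \<in> Pi_pairs n R \<longrightarrow> hasse_connected R (J1 \<inter> J2))"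
  unfolding intersections_connected_def Pi_pairs_def
  by (auto simp: doubleton_eq_iff Int_commute)

lemma hasse_component_inter_J_conn:
  assumes po: "partial_order_on {1..n} R" and ic: "intersections_connected n R"
    and K: "order_ideal n R K" and A: "A \<in> J_conn n R" "\<not> A \<subseteq> K" and x: "x \<in> A \<inter> K"
  shows "hasse_component R K x \<inter> A = hasse_component R (A \<inter> K) x"
proof (intro equalityI subsetI)
  have oA: "order_ideal n R A" using A(1) unfolding J_conn_def by simp
  have dAK: "down_closed R (A \<inter> K)" using oA K unfolding order_ideal_def down_closed_def by blast
  fix y assume y: "y \<in> hasse_component R K x \<inter> A"
  define C where "C = hasse_component R K x"
  have Cc: "C \<in> hasse_components R K" unfolding C_def hasse_components_def using x by auto
  have CJ: "C \<in> J_conn n R" using hasse_component_in_J_conn[OF po K Cc] .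
  have dC: "down_closed R C" using down_closed_hasse_component[OF po K Cc] .
  have xC: "x \<in> C" "y \<in> C" using y x hasse_component_self unfolding C_def by auto
  have CK: "C \<subseteq> K" using hasse_components_subset[OF Cc] .
  obtain D where D: "down_closed R D" "hasse_connected R D" "D \<subseteq> A \<inter> K" "x \<in> D" "y \<in> D"
  proof (cases "C \<subseteq> A")
    case True
    then show ?thesis using that[OF dC hasse_connected_component[OF Cc]] xC CK by blast
  next
    case False
    then have "intersect_nontrivially A C"
      using A(2) CK xC x unfolding intersect_nontrivially_def by blast
    then have "hasse_connected R (A \<inter> C)" using ic A(1) CJ unfolding intersections_connected_def by blast
    moreover have "down_closed R (A \<inter> C)"
      using dC order_ideal_down_closed[OF oA] unfolding down_closed_def by blast
    ultimately show ?thesis using that[of "A \<inter> C"] CK xC x y by blast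
  qed
  then show "y \<in> hasse_component R (A \<inter> K) x"
    using hasse_connected_path[OF D(1,3,2,4,5)] unfolding hasse_component_def by blast
next
  have oA: "order_ideal n R A" using A(1) unfolding J_conn_def by simp
  have dAK: "down_closed R (A \<inter> K)" using oA K unfolding order_ideal_def down_closed_def by blast
  fix y assume "y \<in> hasse_component R (A \<inter> K) x"
  then show "y \<in> hasse_component R K x \<inter> A"
    using hasse_path_mono[OF dAK, of K] unfolding hasse_component_def by auto
qed

text \<open>The last edge of a path from \<open>c\<close> to the maximal element \<open>v\<close> enters \<open>v\<close> from below.\<close>
lemma hasse_component_meets_down_set:
  assumes K: "hasse_connected R K" and v: "v \<in> K" "\<forall>y\<in>K. (v, y) \<in> R \<longrightarrow> y = v"
    and C: "C \<in> hasse_components R (K - {v})"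
  shows "C \<inter> down_set R v \<noteq> {}"
proof -
  let ?K' = "K - {v}"
  obtain c where c: "c \<in> ?K'" "C = hasse_component R ?K' c"
    using C unfolding hasse_components_def by auto
  have "(\<exists>y\<in>down_set R v. y \<in> ?K' \<and> (c, y) \<in> (hasse_edges R ?K')\<^sup>*) \<or>
        (z \<in> ?K' \<and> (c, z) \<in> (hasse_edges R ?K')\<^sup>*)"
    if "(c, z) \<in> (hasse_edges R K)\<^sup>*" for z
    using that
  proof (induction rule: rtrancl_induct)
    case (step y z)
    show ?case
    proof (cases "z = v")
      case True
      then have "covers_in R K y v \<or> covers_in R K v y"
        using step.hyps(2) unfolding hasse_edges_def by auto
      then have "(y, v) \<in> R" using v unfolding covers_in_def strict_le_def by auto
      then show ?thesis using step.IH unfolding down_set_def by auto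
    next
      case False
      then have "y \<in> ?K' \<Longrightarrow> (y, z) \<in> hasse_edges R ?K'"
        using hasse_edges_restrict[of ?K' K y z R] step.hyps(2) hasse_edgesD by blast
      then show ?thesis using step.IH False hasse_edgesD[OF step.hyps(2)]
        by (auto intro: rtrancl_into_rtrancl)
    qed
  qed (use c in auto)
  moreover have "(c, v) \<in> (hasse_edges R K)\<^sup>*"
    using K c(1) v(1) unfolding hasse_connected_def by auto
  ultimately obtain y where "y \<in> down_set R v" "y \<in> ?K'" "(c, y) \<in> (hasse_edges R ?K')\<^sup>*"
    by blast
  then show ?thesis using c(2) unfolding hasse_component_def by auto
qed

lemma card_hasse_components_remove_maximal:
  assumes po: "partial_order_on {1..n} R" and ic: "intersections_connected n R"
    and K: "order_ideal n R K" "hasse_connected R K"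
    and v: "v \<in> K" "\<forall>y\<in>K. (v, y) \<in> R \<longrightarrow> y = v"
  shows "card (hasse_components R (K - {v})) = card (hasse_components R (down_set R v - {v}))"
proof -
  define A where "A = down_set R v"
  let ?K' = "K - {v}"
  have AJ: "A \<in> J_conn n R" and "A \<subseteq> K" unfolding A_def using down_set_in_J_conn[OF po K(1) v(1)] by auto
  then have AK': "A \<inter> ?K' = A - {v}" by auto
  have "v \<in> A" unfolding A_def using down_set_self[OF po K(1) v(1)] .
  then have "\<not> A \<subseteq> ?K'" by auto
  note restrict = hasse_component_inter_J_conn[OF po ic order_ideal_remove_maximal[OF K(1) v(2)] AJ this]
  note meets = hasse_component_meets_down_set[OF K(2) v, folded A_def]
  have "hasse_components R (A - {v}) = (\<lambda>C. C \<inter> A) ` hasse_components R ?K'"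
  proof (intro equalityI subsetI)
    fix D assume "D \<in> hasse_components R (A - {v})"
    then obtain x where "x \<in> A \<inter> ?K'" "D = hasse_component R (A \<inter> ?K') x"
      unfolding hasse_components_def AK' by auto
    then show "D \<in> (\<lambda>C. C \<inter> A) ` hasse_components R ?K'"
      using restrict unfolding hasse_components_def by auto
  next
    fix D assume "D \<in> (\<lambda>C. C \<inter> A) ` hasse_components R ?K'"
    then obtain C where C: "C \<in> hasse_components R ?K'" "D = C \<inter> A" by auto
    obtain x where x: "x \<in> C" "x \<in> A" using meets[OF C(1)] by auto
    have "C = hasse_component R ?K' x"
      using C(1) x(1) hasse_component_eq unfolding hasse_components_def by blast
    moreover have "x \<in> A \<inter> ?K'" using x C(1) hasse_components_subset by blast
    ultimately show "D \<in> hasse_components R (A - {v})"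
      using restrict C(2) unfolding hasse_components_def AK'[symmetric] by auto
  qed
  moreover have "inj_on (\<lambda>C. C \<inter> A) (hasse_components R ?K')"
  proof (rule inj_onI)
    fix C1 C2 assume C: "C1 \<in> hasse_components R ?K'" "C2 \<in> hasse_components R ?K'"
      and "C1 \<inter> A = C2 \<inter> A"
    then have "C1 \<inter> C2 \<noteq> {}" using meets[OF C(1)] by auto
    then show "C1 = C2" using hasse_components_disjoint[OF C] by blast
  qed
  ultimately show ?thesis unfolding A_def by (simp add: card_image)
qed

lemma sum_remove_from_subset:
  fixes w :: "'a \<Rightarrow> 'b::ab_group_add"
  assumes "finite K" "A \<subseteq> K" "v \<in> A"
  shows "sum w K = sum w A + sum w (K - {v}) - sum w (A - {v})"
proof -
  have "A \<union> (K - {v}) = K" "A \<inter> (K - {v}) = A - {v}" using assms(2,3) by auto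
  then show ?thesis using sum_Un[of A "K - {v}" w] assms(1) finite_subset[OF assms(2,1)] by simp
qed

lemma sum_unit_weight_order_ideal:
  assumes po: "partial_order_on {1..n} R" and ic: "intersections_connected n R"
    and w: "unit_weight n R w"
  shows "order_ideal n R K \<Longrightarrow> sum w K = int (card (hasse_components R K))"
proof (induction "card K" arbitrary: K rule: less_induct)
  case (less K)
  have finK: "finite K" using order_ideal_finite[OF less.prems] .
  consider "K = {}" | "K \<noteq> {}" "\<not> hasse_connected R K" | "K \<noteq> {}" "hasse_connected R K"
    by blast
  then show ?case
  proof cases
    case 1
    then show ?thesis unfolding hasse_components_def by simp
  next
    case 2
    have "sum w C = 1" if C: "C \<in> hasse_components R K" for C
    proof -
      have "C \<subset> K" using hasse_components_subset[OF C] hasse_connected_component[OF C] 2 by auto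
      then have "card C < card K" using finK by (intro psubset_card_mono)
      moreover have "order_ideal n R C"
        using hasse_component_in_J_conn[OF po less.prems C] unfolding J_conn_def by simp
      ultimately have "sum w C = int (card (hasse_components R C))" using less.hyps by blast
      then show ?thesis
        using hasse_components_connected[OF hasse_connected_component[OF C] hasse_components_nonempty[OF C]]
        by simp
    qed
    then show ?thesis using sum_hasse_components[OF finK, of w R] by simp
  next
    case 3
    obtain v where v: "v \<in> K" "\<forall>y\<in>K. (v, y) \<in> R \<longrightarrow> y = v"
      using exists_maximal[OF finK 3(1) partial_order_onD(1,2)[OF po]]
        partial_order_onD(3)[OF po] order_ideal_subset[OF less.prems] by blast
    define A where "A = down_set R v"
    have AK: "A \<subseteq> K" and vA: "v \<in> A"
      unfolding A_def using down_set_in_J_conn[OF po less.prems v(1)] down_set_self[OF po less.prems v(1)]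
      by auto
    have "card (K - {v}) < card K" using v(1) finK by (meson card_Diff1_less)
    moreover have "card (A - {v}) < card K" using AK vA finK by (intro psubset_card_mono) auto
    ultimately have "sum w (K - {v}) = int (card (hasse_components R (K - {v})))"
      "sum w (A - {v}) = int (card (hasse_components R (A - {v})))"
      using less.hyps order_ideal_remove_maximal[OF less.prems v(2)]
        order_ideal_down_set_remove[OF po less.prems v(1)] unfolding A_def by blast+
    moreover have "sum w A = 1"
      using w v(1) AK order_ideal_subset[OF less.prems] unfolding unit_weight_def A_def by auto
    ultimately have "sum w K = 1"
      using sum_remove_from_subset[OF finK AK vA, of w]
        card_hasse_components_remove_maximal[OF po ic less.prems 3(2) v] unfolding A_def
      by simp
    then show ?thesis using hasse_components_connected[OF 3(2,1)] by simp
  qed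
qed

lemma sum_unit_weight_J_conn:
  assumes po: "partial_order_on {1..n} R" and ic: "intersections_connected n R"
    and w: "unit_weight n R w" and J: "J \<in> J_conn n R"
  shows "sum w J = 1"
  using J sum_unit_weight_order_ideal[OF po ic w] hasse_components_connected
  unfolding J_conn_def by simp

section \<open>The exponent map of \<open>\<phi>\<close> and homogeneity of \<open>I_P\<close>\<close>

definition set_exp :: "nat set \<Rightarrow> (nat \<Rightarrow>\<^sub>0 nat)" where
  "set_exp J = (\<Sum>j\<in>J. Poly_Mapping.single j 1)"

text \<open>\<open>\<phi>\<close> maps the monomial \<open>U\<^sup>m\<close> to \<open>x\<^sup>(phi_exp m)\<close>.\<close>
definition phi_exp :: "(nat set \<Rightarrow>\<^sub>0 nat) \<Rightarrow> (nat \<Rightarrow>\<^sub>0 nat)" where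
  "phi_exp m = (\<Sum>J\<in>Poly_Mapping.keys m. \<Sum>j\<in>J. Poly_Mapping.single j (Poly_Mapping.lookup m J))"

lemma lookup_sum_single_set:
  "Poly_Mapping.lookup (\<Sum>j\<in>J. Poly_Mapping.single j (c::nat)) v = (if finite J \<and> v \<in> J then c else 0)"
  by (cases "finite J") (auto simp: lookup_sum lookup_single when_def)

lemma lookup_set_exp: "finite J \<Longrightarrow> Poly_Mapping.lookup (set_exp J) v = (if v \<in> J then 1 else 0)"
  unfolding set_exp_def lookup_sum_single_set by simp

lemma set_exp_union_inter:
  "finite A \<Longrightarrow> finite C \<Longrightarrow> set_exp A + set_exp C = set_exp (A \<union> C) + set_exp (A \<inter> C)"
  unfolding set_exp_def by (simp add: sum.union_inter)

lemma sum_single_keys: "(\<Sum>f\<in>Poly_Mapping.keys p. Poly_Mapping.single f (Poly_Mapping.lookup p f)) = p"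
  by (rule poly_mapping_eqI) (auto simp: lookup_sum lookup_single when_def in_keys_iff)

lemma phi_exp_superset:
  assumes "finite T" "Poly_Mapping.keys m \<subseteq> T"
  shows "phi_exp m = (\<Sum>J\<in>T. \<Sum>j\<in>J. Poly_Mapping.single j (Poly_Mapping.lookup m J))"
  unfolding phi_exp_def by (rule sum.mono_neutral_left[OF assms]) (auto simp: in_keys_iff)

lemma phi_exp_add: "phi_exp (a + b) = phi_exp a + phi_exp b"
proof -
  let ?T = "Poly_Mapping.keys a \<union> Poly_Mapping.keys b"
  have "phi_exp (a + b) = (\<Sum>J\<in>?T. \<Sum>j\<in>J. Poly_Mapping.single j (Poly_Mapping.lookup (a + b) J))"
    by (rule phi_exp_superset) (auto simp: keys_add)
  also have "\<dots> = phi_exp a + phi_exp b"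
    by (simp add: phi_exp_superset[of ?T a] phi_exp_superset[of ?T b] lookup_add single_add
        sum.distrib)
  finally show ?thesis .
qed

lemma phi_exp_single: "phi_exp (Poly_Mapping.single J k) = (\<Sum>j\<in>J. Poly_Mapping.single j k)"
  unfolding phi_exp_def by simp

lemma phi_exp_zero [simp]: "phi_exp 0 = 0"
  unfolding phi_exp_def by simp

lemma phi_exp_sum: "finite F \<Longrightarrow> phi_exp (\<Sum>D\<in>F. f D) = (\<Sum>D\<in>F. phi_exp (f D))"
  by (induction F rule: finite_induct) (simp_all add: phi_exp_add)

lemma xJ_eq_single: "(xJ J :: (nat, 'k::comm_ring_1) mpoly) = Poly_Mapping.single (set_exp J) 1"
proof (cases "finite J")
  case True
  then show ?thesis unfolding xJ_def set_exp_def
    by (induction J rule: finite_induct) (simp_all add: pvar_def mult_single)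
qed (simp add: xJ_def set_exp_def)

lemma phi_eq_sum_single:
  "(phi g :: (nat, 'k::comm_ring_1) mpoly)
     = (\<Sum>m\<in>Poly_Mapping.keys g. Poly_Mapping.single (phi_exp m) (Poly_Mapping.lookup g m))"
proof -
  have pow: "Poly_Mapping.single (set_exp J) (1::'k) ^ k
      = Poly_Mapping.single (\<Sum>j\<in>J. Poly_Mapping.single j k) 1" for J k
  proof (induction k)
    case (Suc k)
    have "set_exp J + (\<Sum>j\<in>J. Poly_Mapping.single j k) = (\<Sum>j\<in>J. Poly_Mapping.single j (Suc k))"
      unfolding set_exp_def by (simp add: sum.distrib[symmetric] single_add[symmetric])
    then show ?case using Suc by (simp add: mult_single)
  qed simp
  have prod: "finite S \<Longrightarrow> (\<Prod>J\<in>S. Poly_Mapping.single (e J) (1::'k)) = Poly_Mapping.single (sum e S) 1"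
    for S and e :: "nat set \<Rightarrow> nat \<Rightarrow>\<^sub>0 nat"
    by (induction S rule: finite_induct) (simp_all add: mult_single)
  have "(\<Prod>J\<in>Poly_Mapping.keys m. (xJ J :: (nat, 'k) mpoly) ^ Poly_Mapping.lookup m J)
      = Poly_Mapping.single (phi_exp m) 1" for m
    unfolding xJ_eq_single pow phi_exp_def by (rule prod) simp
  then show ?thesis unfolding phi_def peval_def pconst_def by (simp add: mult_single)
qed

lemma phi_zero [simp]: "phi 0 = 0"
  unfolding phi_eq_sum_single by simp

lemma phi_single: "(phi (Poly_Mapping.single m c) :: (nat, 'k::comm_ring_1) mpoly) = Poly_Mapping.single (phi_exp m) c"
  unfolding phi_eq_sum_single by (cases "c = 0") simp_all

lemma lookup_phi:
  "Poly_Mapping.lookup (phi g :: (nat, 'k::comm_ring_1) mpoly) f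
    = (\<Sum>m\<in>{m\<in>Poly_Mapping.keys g. phi_exp m = f}. Poly_Mapping.lookup g m)"
  unfolding phi_eq_sum_single lookup_sum lookup_single
  by (simp add: sum.inter_filter when_def)

lemma lookup_phi_superset:
  assumes "finite T" "Poly_Mapping.keys g \<subseteq> T"
  shows "Poly_Mapping.lookup (phi g :: (nat, 'k::comm_ring_1) mpoly) f
    = (\<Sum>m\<in>{m\<in>T. phi_exp m = f}. Poly_Mapping.lookup g m)"
  unfolding lookup_phi using assms
  by (intro sum.mono_neutral_left) (auto simp: in_keys_iff)

lemma phi_diff: "(phi (g - h) :: (nat, 'k::comm_ring_1) mpoly) = phi g - phi h"
proof (rule poly_mapping_eqI)
  fix f
  let ?T = "Poly_Mapping.keys g \<union> Poly_Mapping.keys h"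
  have "Poly_Mapping.keys (g - h) \<subseteq> ?T" by (auto simp: in_keys_iff lookup_minus)
  then show "Poly_Mapping.lookup (phi (g - h) :: (nat, 'k) mpoly) f = Poly_Mapping.lookup (phi g - phi h) f"
    by (simp add: lookup_phi_superset[of ?T] lookup_minus sum_subtractf)
qed

lemma lookup_hom_comp:
  "Poly_Mapping.lookup (hom_comp d g) m = (if mdeg m = d then Poly_Mapping.lookup g m else 0)"
  unfolding hom_comp_def lookup_sum lookup_single
  by (auto simp: when_def sum.inter_filter in_keys_iff)

lemma keys_hom_comp: "Poly_Mapping.keys (hom_comp d g) = {m\<in>Poly_Mapping.keys g. mdeg m = d}"
  by (auto simp: in_keys_iff lookup_hom_comp split: if_splits)

lemma hom_comp_hom_comp:
  "hom_comp d (hom_comp e g) = (if d = e then hom_comp e g else (0::('v,'k::comm_ring_1) mpoly))"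
  by (rule poly_mapping_eqI) (auto simp: lookup_hom_comp)

lemma hom_comp_in_S_ring: "g \<in> S_ring n R \<Longrightarrow> hom_comp d g \<in> S_ring n R"
  unfolding S_ring_def by (auto simp: keys_hom_comp)

lemma mdeg_superset:
  assumes "finite T" "Poly_Mapping.keys m \<subseteq> T"
  shows "mdeg m = (\<Sum>x\<in>T. Poly_Mapping.lookup m x)"
  unfolding mdeg_def by (rule sum.mono_neutral_left[OF assms]) (auto simp: in_keys_iff)

lemma mdeg_add: "mdeg (a + b) = mdeg a + mdeg b"
  using mdeg_superset[of "Poly_Mapping.keys a \<union> Poly_Mapping.keys b"]
  by (simp add: keys_add lookup_add sum.distrib)

lemma mdeg_single [simp]: "mdeg (Poly_Mapping.single x k) = k"
  unfolding mdeg_def by simp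

lemma mdeg_zero [simp]: "mdeg 0 = 0"
  unfolding mdeg_def by simp

lemma mdeg_sum: "finite F \<Longrightarrow> mdeg (\<Sum>D\<in>F. f D) = (\<Sum>D\<in>F. mdeg (f D))"
  by (induction F rule: finite_induct) (simp_all add: mdeg_add)

lemma binomial_in_I_P:
  assumes "Poly_Mapping.keys m1 \<subseteq> J_conn n R" "Poly_Mapping.keys m2 \<subseteq> J_conn n R"
    and "phi_exp m1 = phi_exp m2"
  shows "Poly_Mapping.single m1 1 - Poly_Mapping.single m2 1 \<in> (I_P n R :: (nat set, 'k::comm_ring_1) mpoly set)"
proof -
  have "Poly_Mapping.keys (Poly_Mapping.single m1 1 - Poly_Mapping.single m2 (1::'k)) \<subseteq> {m1, m2}"
    by (auto simp: in_keys_iff lookup_minus lookup_single when_def split: if_splits)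
  then show ?thesis
    using assms unfolding I_P_def S_ring_def by (auto simp: phi_diff phi_single)
qed

lemma homogeneous_ideal_binomialD:
  fixes I :: "('v, 'k::comm_ring_1) mpoly set"
  assumes "homogeneous_ideal I" "Poly_Mapping.single m1 1 - Poly_Mapping.single m2 1 \<in> I"
    and "mdeg m1 \<noteq> mdeg m2"
  shows "Poly_Mapping.single m1 1 \<in> I"
proof -
  have "hom_comp (mdeg m1) (Poly_Mapping.single m1 1 - Poly_Mapping.single m2 (1::'k))
      = Poly_Mapping.single m1 1"
    using assms(3) by (intro poly_mapping_eqI) (auto simp: lookup_hom_comp lookup_minus lookup_single when_def)
  then show ?thesis using assms(1,2) unfolding homogeneous_ideal_def by metis
qed

lemma single_notin_I_P: "Poly_Mapping.single m 1 \<notin> (I_P n R :: (nat set, 'k::comm_ring_1) mpoly set)"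
proof
  assume "Poly_Mapping.single m 1 \<in> (I_P n R :: (nat set, 'k) mpoly set)"
  then have "Poly_Mapping.single (phi_exp m) (1::'k) = 0"
    unfolding I_P_def using phi_single[of m "1::'k"] by simp
  then show False by (metis lookup_single_eq lookup_zero one_neq_zero)
qed

lemma intersections_connected_if_homogeneous:
  assumes po: "partial_order_on {1..n} R"
    and hom: "homogeneous_ideal (I_P n R :: (nat set, 'k::comm_ring_1) mpoly set)"
  shows "intersections_connected n R"
  unfolding intersections_connected_def
proof (intro allI impI; elim conjE)
  fix A C assume A: "A \<in> J_conn n R" and C: "C \<in> J_conn n R" and nt: "intersect_nontrivially A C"
  show "hasse_connected R (A \<inter> C)"
  proof (rule ccontr)
    assume disconnected: "\<not> hasse_connected R (A \<inter> C)"
    define F where "F = hasse_components R (A \<inter> C)"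
    have oA: "order_ideal n R A" and oC: "order_ideal n R C" using A C unfolding J_conn_def by auto
    have oK: "order_ideal n R (A \<inter> C)" using oA oC unfolding order_ideal_def by blast
    have finA: "finite A" and finC: "finite C" and finK: "finite (A \<inter> C)"
      using oA oC oK by (simp_all add: order_ideal_finite)
    have finF: "finite F" unfolding F_def using finite_hasse_components[OF finK] .
    have "card F \<ge> 2"
      using hasse_connected_if_card_components_le_1[OF _ finK] disconnected nt
      unfolding F_def intersect_nontrivially_def by fastforce
    define m1 :: "nat set \<Rightarrow>\<^sub>0 nat" where "m1 = Poly_Mapping.single A 1 + Poly_Mapping.single C 1"
    define m2 :: "nat set \<Rightarrow>\<^sub>0 nat"
      where "m2 = Poly_Mapping.single (A \<union> C) 1 + (\<Sum>D\<in>F. Poly_Mapping.single D 1)"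
    have "mdeg m1 \<noteq> mdeg m2"
      using \<open>card F \<ge> 2\<close> unfolding m1_def m2_def by (simp add: mdeg_add mdeg_sum[OF finF])
    moreover have "Poly_Mapping.keys m1 \<subseteq> J_conn n R"
      using A C unfolding m1_def by (auto dest!: set_mp[OF keys_add])
    moreover have "Poly_Mapping.keys m2 \<subseteq> J_conn n R"
      using union_in_J_conn[OF A C] hasse_component_in_J_conn[OF po oK] nt keys_sum
      unfolding m2_def F_def intersect_nontrivially_def by (fastforce dest!: set_mp[OF keys_add])
    moreover have "phi_exp m1 = phi_exp m2"
    proof -
      have "phi_exp m1 = set_exp (A \<union> C) + set_exp (A \<inter> C)"
        unfolding m1_def phi_exp_add phi_exp_single set_exp_union_inter[OF finA finC, symmetric]
        by (simp add: set_exp_def)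
      also have "set_exp (A \<inter> C) = (\<Sum>D\<in>F. set_exp D)"
        unfolding set_exp_def F_def by (rule sum_hasse_components[OF finK])
      finally show ?thesis
        unfolding m2_def phi_exp_add phi_exp_sum[OF finF] phi_exp_single by (simp add: set_exp_def)
    qed
    ultimately have "Poly_Mapping.single m1 1 \<in> (I_P n R :: (nat set, 'k) mpoly set)"
      using homogeneous_ideal_binomialD[OF hom binomial_in_I_P] by blast
    then show False using single_notin_I_P by blast
  qed
qed

definition wdeg :: "nat \<Rightarrow> (nat \<Rightarrow> int) \<Rightarrow> (nat \<Rightarrow>\<^sub>0 nat) \<Rightarrow> int" where
  "wdeg n w f = (\<Sum>v\<in>{1..n}. int (Poly_Mapping.lookup f v) * w v)"

lemma wdeg_add: "wdeg n w (f + g) = wdeg n w f + wdeg n w g"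
  unfolding wdeg_def by (simp add: lookup_add sum.distrib algebra_simps)

lemma wdeg_zero [simp]: "wdeg n w 0 = 0"
  unfolding wdeg_def by simp

lemma wdeg_sum: "finite F \<Longrightarrow> wdeg n w (\<Sum>D\<in>F. f D) = (\<Sum>D\<in>F. wdeg n w (f D))"
  by (induction F rule: finite_induct) (simp_all add: wdeg_add)

lemma wdeg_single_set:
  assumes "J \<subseteq> {1..n}"
  shows "wdeg n w (\<Sum>j\<in>J. Poly_Mapping.single j k) = int k * sum w J"
proof -
  have "finite J" using assms finite_subset by blast
  then have "wdeg n w (\<Sum>j\<in>J. Poly_Mapping.single j k) = (\<Sum>v\<in>{1..n}. if v \<in> J then int k * w v else 0)"
    unfolding wdeg_def lookup_sum_single_set by (intro sum.cong) auto
  also have "\<dots> = int k * sum w J"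
    using assms by (simp add: sum.If_cases Int_absorb1 sum_distrib_left)
  finally show ?thesis .
qed

lemma mdeg_eq_wdeg_phi_exp:
  assumes po: "partial_order_on {1..n} R" and ic: "intersections_connected n R"
    and w: "unit_weight n R w" and m: "Poly_Mapping.keys m \<subseteq> J_conn n R"
  shows "int (mdeg m) = wdeg n w (phi_exp m)"
proof -
  have "J \<subseteq> {1..n}" if "J \<in> Poly_Mapping.keys m" for J
    using m that unfolding J_conn_def order_ideal_def by auto
  then have "wdeg n w (phi_exp m) = (\<Sum>J\<in>Poly_Mapping.keys m. int (Poly_Mapping.lookup m J) * sum w J)"
    unfolding phi_exp_def by (simp add: wdeg_sum wdeg_single_set)
  also have "\<dots> = int (mdeg m)"
    using sum_unit_weight_J_conn[OF po ic w] m unfolding mdeg_def by (simp add: subset_iff)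
  finally show ?thesis by simp
qed

lemma lookup_phi_hom_comp:
  assumes "\<forall>m\<in>Poly_Mapping.keys g. int (mdeg m) = wdeg n w (phi_exp m)"
  shows "Poly_Mapping.lookup (phi (hom_comp d g) :: (nat, 'k::comm_ring_1) mpoly) f
     = (if wdeg n w f = int d then Poly_Mapping.lookup (phi g) f else 0)"
proof -
  have "Poly_Mapping.lookup (phi (hom_comp d g) :: (nat, 'k) mpoly) f
      = (\<Sum>m\<in>{m\<in>{m\<in>Poly_Mapping.keys g. mdeg m = d}. phi_exp m = f}. Poly_Mapping.lookup g m)"
    unfolding lookup_phi keys_hom_comp by (intro sum.cong refl) (auto simp: lookup_hom_comp)
  also have "{m\<in>{m\<in>Poly_Mapping.keys g. mdeg m = d}. phi_exp m = f}
      = (if wdeg n w f = int d then {m\<in>Poly_Mapping.keys g. phi_exp m = f} else {})"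
    using assms by auto
  finally show ?thesis unfolding lookup_phi by simp
qed

lemma homogeneous_if_intersections_connected:
  assumes po: "partial_order_on {1..n} R" and ic: "intersections_connected n R"
  shows "homogeneous_ideal (I_P n R :: (nat set, 'k::comm_ring_1) mpoly set)"
  unfolding homogeneous_ideal_def
proof (intro ballI allI)
  obtain w where w: "unit_weight n R w" using exists_unit_weight[OF po] by blast
  fix g :: "(nat set, 'k) mpoly" and d assume g: "g \<in> I_P n R"
  then have gS: "g \<in> S_ring n R" and "phi g = 0" unfolding I_P_def by auto
  moreover have deg: "\<forall>m\<in>Poly_Mapping.keys g. int (mdeg m) = wdeg n w (phi_exp m)"
    using mdeg_eq_wdeg_phi_exp[OF po ic w] gS unfolding S_ring_def by auto
  ultimately have "phi (hom_comp d g) = (0 :: (nat, 'k) mpoly)"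
    by (intro poly_mapping_eqI) (simp add: lookup_phi_hom_comp[OF deg])
  then show "hom_comp d g \<in> I_P n R" unfolding I_P_def using hom_comp_in_S_ring[OF gS] by simp
qed

section \<open>Weak \<open>P\<close>-partitions and their weighted degree\<close>

lemma weak_P_partition_add:
  assumes "weak_P_partition n R f" "weak_P_partition n R g"
  shows "weak_P_partition n R (f + g)"
  using assms keys_add[of f g] unfolding weak_P_partition_def
  by (auto simp: lookup_add intro: add_mono)

lemma weak_P_partition_zero [simp]: "weak_P_partition n R 0"
  unfolding weak_P_partition_def by simp

lemma weak_P_partition_lookup_outside: "weak_P_partition n R f \<Longrightarrow> v \<notin> {1..n} \<Longrightarrow> Poly_Mapping.lookup f v = 0"
  unfolding weak_P_partition_def by (auto simp: in_keys_iff)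

lemma order_ideal_level_set:
  assumes wf: "weak_P_partition n R f" and k: "1 \<le> k"
  shows "order_ideal n R {v\<in>{1..n}. k \<le> Poly_Mapping.lookup f v}"
  unfolding order_ideal_def
proof (intro conjI allI impI)
  show "{v\<in>{1..n}. k \<le> Poly_Mapping.lookup f v} \<subseteq> {1..n}" by auto
  fix i j assume h: "j \<in> {v\<in>{1..n}. k \<le> Poly_Mapping.lookup f v} \<and> (i, j) \<in> R"
  show "i \<in> {v\<in>{1..n}. k \<le> Poly_Mapping.lookup f v}"
  proof (cases "i = j")
    case True then show ?thesis using h by simp
  next
    case False
    then have "strict_le R i j" using h unfolding strict_le_def by simp
    then have "Poly_Mapping.lookup f i \<ge> Poly_Mapping.lookup f j" using wf unfolding weak_P_partition_def by blast
    then have fi: "Poly_Mapping.lookup f i \<ge> k" using h by auto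
    then have "i \<in> {1..n}" using weak_P_partition_lookup_outside[OF wf, of i] k by (cases "i \<in> {1..n}") auto
    then show ?thesis using fi by simp
  qed
qed

lemma wdeg_eq_sum_level_sets:
  fixes n :: nat and f :: "nat \<Rightarrow>\<^sub>0 nat"
  defines "N \<equiv> (\<Sum>v\<in>{1..n}. Poly_Mapping.lookup f v)"
  shows "wdeg n w f = (\<Sum>k\<in>{1..N}. sum w {v\<in>{1..n}. k \<le> Poly_Mapping.lookup f v})"
proof -
  have each: "int (Poly_Mapping.lookup f v) * w v = (\<Sum>k\<in>{1..N}. if k \<le> Poly_Mapping.lookup f v then w v else 0)"
    if v: "v \<in> {1..n}" for v
  proof -
    have le: "Poly_Mapping.lookup f v \<le> N" unfolding N_def using v by (intro member_le_sum) auto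
    have "{k\<in>{1..N}. k \<le> Poly_Mapping.lookup f v} = {1..Poly_Mapping.lookup f v}" using le by auto
    then have "(\<Sum>k\<in>{1..N}. if k \<le> Poly_Mapping.lookup f v then w v else 0) = (\<Sum>k\<in>{1..Poly_Mapping.lookup f v}. w v)"
      by (simp add: sum.inter_filter[symmetric])
    then show ?thesis by simp
  qed
  have "wdeg n w f = (\<Sum>v\<in>{1..n}. \<Sum>k\<in>{1..N}. if k \<le> Poly_Mapping.lookup f v then w v else 0)"
    unfolding wdeg_def using each by (intro sum.cong) auto
  also have "\<dots> = (\<Sum>k\<in>{1..N}. \<Sum>v\<in>{1..n}. if k \<le> Poly_Mapping.lookup f v then w v else 0)"
    by (rule sum.swap)
  also have "\<dots> = (\<Sum>k\<in>{1..N}. sum w {v\<in>{1..n}. k \<le> Poly_Mapping.lookup f v})"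
    by (rule sum.cong[OF refl]) (rule sum.inter_filter[symmetric], simp)
  finally show ?thesis .
qed

text \<open>The weighted degree of \<open>f\<close> counts the connected components of all level sets of \<open>f\<close>.\<close>
lemma wdeg_bounds:
  assumes po: "partial_order_on {1..n} R" and ic: "intersections_connected n R" and w: "unit_weight n R w"
    and wf: "weak_P_partition n R f"
  shows "wdeg n w f \<ge> 0" "f \<noteq> 0 \<Longrightarrow> wdeg n w f \<ge> 1"
proof -
  define N where "N = (\<Sum>v\<in>{1..n}. Poly_Mapping.lookup f v)"
  have L: "wdeg n w f = (\<Sum>k\<in>{1..N}. sum w {v\<in>{1..n}. k \<le> Poly_Mapping.lookup f v})"
    unfolding N_def by (rule wdeg_eq_sum_level_sets)
  have t: "sum w {v\<in>{1..n}. k \<le> Poly_Mapping.lookup f v} = int (card (hasse_components R {v\<in>{1..n}. k \<le> Poly_Mapping.lookup f v}))"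
    if "k \<in> {1..N}" for k
    using sum_unit_weight_order_ideal[OF po ic w order_ideal_level_set[OF wf]] that by auto
  have nn: "\<forall>k\<in>{1..N}. 0 \<le> sum w {v\<in>{1..n}. k \<le> Poly_Mapping.lookup f v}" using t by simp
  show "wdeg n w f \<ge> 0" unfolding L by (rule sum_nonneg) (use nn in blast)
  assume "f \<noteq> 0"
  then obtain v where v: "Poly_Mapping.lookup f v \<noteq> 0" by (metis poly_mapping_eqI lookup_zero)
  have vn: "v \<in> {1..n}" using weak_P_partition_lookup_outside[OF wf, of v] v by auto
  have le: "Poly_Mapping.lookup f v \<le> N" unfolding N_def using vn by (intro member_le_sum) auto
  have N1: "1 \<in> {1..N}" using v le by auto
  let ?K = "{v\<in>{1..n}. 1 \<le> Poly_Mapping.lookup f v}"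
  have "v \<in> ?K" using vn v by auto
  then have "hasse_components R ?K \<noteq> {}" unfolding hasse_components_def by auto
  moreover have "finite (hasse_components R ?K)" by (intro finite_hasse_components) auto
  ultimately have "card (hasse_components R ?K) \<ge> 1" by (simp add: Suc_le_eq card_gt_0_iff)
  then have "sum w ?K \<ge> 1" using t[OF N1] by simp
  moreover have "sum w ?K \<le> wdeg n w f" unfolding L using nn N1
    by (intro member_le_sum[where i=1 and f="\<lambda>k. sum w {v\<in>{1..n}. k \<le> Poly_Mapping.lookup f v}"]) auto
  ultimately show "wdeg n w f \<ge> 1" by simp
qed

lemma weak_P_partition_minus_set_exp:
  assumes wf: "weak_P_partition n R f" and J: "finite J" "down_closed R J"
    and pos: "\<forall>j\<in>J. 1 \<le> Poly_Mapping.lookup f j"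
    and up: "\<forall>i\<in>J. \<forall>j. (i, j) \<in> R \<and> 1 \<le> Poly_Mapping.lookup f j \<longrightarrow> j \<in> J"
  shows "weak_P_partition n R (f - set_exp J)" "f = set_exp J + (f - set_exp J)"
proof -
  have lookup_diff: "Poly_Mapping.lookup (f - set_exp J) v = Poly_Mapping.lookup f v - (if v \<in> J then 1 else 0)" for v
    unfolding lookup_minus lookup_set_exp[OF J(1)] ..
  show "f = set_exp J + (f - set_exp J)"
  proof (rule poly_mapping_eqI)
    fix v
    show "Poly_Mapping.lookup f v = Poly_Mapping.lookup (set_exp J + (f - set_exp J)) v"
      using pos unfolding lookup_add lookup_diff lookup_set_exp[OF J(1)] by auto
  qed
  have "Poly_Mapping.lookup (f - set_exp J) j \<le> Poly_Mapping.lookup (f - set_exp J) i"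
    if "strict_le R i j" for i j
  proof -
    have "Poly_Mapping.lookup f j \<le> Poly_Mapping.lookup f i" "(i, j) \<in> R"
      using wf that unfolding weak_P_partition_def strict_le_def by auto
    moreover have "i \<in> J" if "j \<in> J" using J(2) that \<open>(i, j) \<in> R\<close> unfolding down_closed_def by blast
    moreover have "Poly_Mapping.lookup f j = 0" if "i \<in> J" "j \<notin> J"
      using up that \<open>(i, j) \<in> R\<close> by (metis less_one not_le)
    ultimately show ?thesis unfolding lookup_diff by auto
  qed
  moreover have "Poly_Mapping.keys (f - set_exp J) \<subseteq> {1..n}"
    using wf unfolding weak_P_partition_def by (auto simp: in_keys_iff lookup_diff)
  ultimately show "weak_P_partition n R (f - set_exp J)" unfolding weak_P_partition_def by blast
qed

text \<open>\<open>J\<close> is taken to be a connected component of the support of \<open>f\<close>.\<close>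
lemma weak_P_partition_split:
  assumes po: "partial_order_on {1..n} R" and wf: "weak_P_partition n R f" and f0: "f \<noteq> 0"
  shows "\<exists>J\<in>J_conn n R. \<exists>g. weak_P_partition n R g \<and> f = set_exp J + g"
proof -
  define K where "K = {v\<in>{1..n}. 1 \<le> Poly_Mapping.lookup f v}"
  have oK: "order_ideal n R K" unfolding K_def by (rule order_ideal_level_set[OF wf]) simp
  obtain a where a: "Poly_Mapping.lookup f a \<noteq> 0" using f0 by (metis poly_mapping_eqI lookup_zero)
  then have "a \<in> K" unfolding K_def using weak_P_partition_lookup_outside[OF wf, of a] by auto
  define J where "J = hasse_component R K a"
  have Jc: "J \<in> hasse_components R K" unfolding J_def hasse_components_def using \<open>a \<in> K\<close> by auto
  have "finite J" using finite_subset[OF hasse_components_subset[OF Jc] order_ideal_finite[OF oK]] .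
  moreover have "down_closed R J" using down_closed_hasse_component[OF po oK Jc] .
  moreover have "\<forall>j\<in>J. 1 \<le> Poly_Mapping.lookup f j"
    using hasse_components_subset[OF Jc] unfolding K_def by auto
  moreover have "\<forall>i\<in>J. \<forall>j. (i, j) \<in> R \<and> 1 \<le> Poly_Mapping.lookup f j \<longrightarrow> j \<in> J"
    using hasse_component_upward_closed[OF po oK] weak_P_partition_lookup_outside[OF wf]
    unfolding J_def K_def by fastforce
  ultimately have "weak_P_partition n R (f - set_exp J)" "f = set_exp J + (f - set_exp J)"
    using weak_P_partition_minus_set_exp[OF wf] by blast+
  then show ?thesis using hasse_component_in_J_conn[OF po oK Jc] by blast
qed

lemma weak_P_partition_set_exp:
  assumes "order_ideal n R J"
  shows "weak_P_partition n R (set_exp J)"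
  using assms lookup_set_exp[OF order_ideal_finite[OF assms]]
  unfolding weak_P_partition_def order_ideal_def strict_le_def
  by (auto simp: in_keys_iff split: if_splits)

section \<open>The powers of \<open>m\<close> as a weight filtration\<close>

lemma pconst_mult_single: "pconst (c::'k::comm_ring_1) * Poly_Mapping.single f 1 = Poly_Mapping.single f c"
  unfolding pconst_def by (simp add: mult_single)

lemma pmonom_inj: "pmonom f = (pmonom g :: ('v, 'k::comm_ring_1) mpoly) \<Longrightarrow> f = g"
  unfolding pmonom_def by (metis lookup_single_eq lookup_single_not_eq one_neq_zero)

lemma kspan_pmonom:
  "kspan {pmonom f | f. P f} = {p :: ('v, 'k::comm_ring_1) mpoly. \<forall>f\<in>Poly_Mapping.keys p. P f}"
proof (intro equalityI subsetI)
  fix p :: "('v, 'k) mpoly" assume "p \<in> kspan {pmonom f | f. P f}"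
  then obtain F c where F: "finite F" "F \<subseteq> {pmonom f | f. P f}" "p = (\<Sum>q\<in>F. pconst (c q) * q)"
    unfolding kspan_def by blast
  have "Poly_Mapping.keys p \<subseteq> (\<Union>q\<in>F. Poly_Mapping.keys (pconst (c q) * q))"
    unfolding F(3) by (rule keys_sum)
  also have "\<dots> \<subseteq> {f. P f}"
  proof
    fix x assume "x \<in> (\<Union>q\<in>F. Poly_Mapping.keys (pconst (c q) * q))"
    then obtain q where q: "q \<in> F" "x \<in> Poly_Mapping.keys (pconst (c q) * q)" by auto
    obtain f where f: "q = pmonom f" "P f" using F(2) q(1) by auto
    have "pconst (c q) * q = Poly_Mapping.single f (c q)" unfolding f(1) pmonom_def pconst_mult_single ..
    then have "x = f" using q(2) by (auto split: if_splits)
    then show "x \<in> {f. P f}" using f by simp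
  qed
  finally show "p \<in> {p. \<forall>f\<in>Poly_Mapping.keys p. P f}" by auto
next
  fix p :: "('v, 'k) mpoly" assume p: "p \<in> {p. \<forall>f\<in>Poly_Mapping.keys p. P f}"
  define c where "c q = Poly_Mapping.lookup p (SOME f. pmonom f = q)" for q :: "('v, 'k) mpoly"
  have inj: "inj_on (pmonom :: _ \<Rightarrow> ('v, 'k) mpoly) (Poly_Mapping.keys p)"
    by (rule inj_onI) (erule pmonom_inj)
  have cf: "c (pmonom f) = Poly_Mapping.lookup p f" for f
  proof -
    have "pmonom (SOME g. pmonom g = (pmonom f :: ('v,'k) mpoly)) = (pmonom f :: ('v,'k) mpoly)"
      by (rule someI) rule
    then have "(SOME g. pmonom g = (pmonom f :: ('v,'k) mpoly)) = f" by (rule pmonom_inj)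
    then show ?thesis unfolding c_def by simp
  qed
  have "(\<Sum>q\<in>pmonom ` Poly_Mapping.keys p. pconst (c q) * q) = (\<Sum>f\<in>Poly_Mapping.keys p. pconst (c (pmonom f)) * pmonom f)"
    using sum.reindex[OF inj, of "\<lambda>q. pconst (c q) * q"] by (simp add: comp_def)
  also have "\<dots> = p" unfolding cf unfolding pmonom_def pconst_mult_single by (rule sum_single_keys)
  finally have "p = (\<Sum>q\<in>pmonom ` Poly_Mapping.keys p. pconst (c q) * q)" by simp
  moreover have "pmonom ` Poly_Mapping.keys p \<subseteq> {pmonom f | f. P f}" using p by auto
  ultimately show "p \<in> kspan {pmonom f | f. P f}" unfolding kspan_def
    by (intro CollectI exI[of _ "pmonom ` Poly_Mapping.keys p"] exI[of _ c] conjI) auto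
qed

lemma set_prod_zero: "0 \<in> set_prod A B"
  unfolding set_prod_def by (rule CollectI, rule exI[of _ "[]"]) simp

lemma set_prod_add: "x \<in> set_prod A B \<Longrightarrow> y \<in> set_prod A B \<Longrightarrow> x + y \<in> set_prod A B"
  unfolding set_prod_def
proof -
  assume "x \<in> {sum_list (map (\<lambda>(a, b). a * b) xs) |xs. set xs \<subseteq> A \<times> B}"
    "y \<in> {sum_list (map (\<lambda>(a, b). a * b) xs) |xs. set xs \<subseteq> A \<times> B}"
  then obtain xs ys where "x = sum_list (map (\<lambda>(a, b). a * b) xs)" "set xs \<subseteq> A \<times> B"
    "y = sum_list (map (\<lambda>(a, b). a * b) ys)" "set ys \<subseteq> A \<times> B" by blast
  then show "x + y \<in> {sum_list (map (\<lambda>(a, b). a * b) xs) |xs. set xs \<subseteq> A \<times> B}"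
    by (intro CollectI exI[of _ "xs @ ys"]) simp
qed

lemma set_prod_mult: "a \<in> A \<Longrightarrow> b \<in> B \<Longrightarrow> a * b \<in> set_prod A B"
  unfolding set_prod_def by (intro CollectI exI[of _ "[(a, b)]"]) simp

lemma set_prod_sum: "finite S \<Longrightarrow> (\<And>s. s \<in> S \<Longrightarrow> f s \<in> set_prod A B) \<Longrightarrow> (\<Sum>s\<in>S. f s) \<in> set_prod A B"
proof (induction S rule: finite_induct)
  case empty then show ?case using set_prod_zero by simp
next
  case (insert s S)
  have "f s \<in> set_prod A B" "sum f S \<in> set_prod A B" using insert by auto
  then show ?case using set_prod_add[of "f s" A B "sum f S"] insert(1,2) by simp
qed

lemma set_prod_subset:
  assumes "\<And>a b. a \<in> A \<Longrightarrow> b \<in> B \<Longrightarrow> a * b \<in> X" "0 \<in> X" "\<And>x y. x \<in> X \<Longrightarrow> y \<in> X \<Longrightarrow> x + y \<in> X"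
  shows "set_prod A B \<subseteq> X"
proof
  fix z assume "z \<in> set_prod A B"
  then obtain xs where z: "z = sum_list (map (\<lambda>(a, b). a * b) xs)" "set xs \<subseteq> A \<times> B"
    unfolding set_prod_def by blast
  have "set xs \<subseteq> A \<times> B \<Longrightarrow> sum_list (map (\<lambda>(a, b). a * b) xs) \<in> X"
  proof (induction xs)
    case Nil then show ?case using assms(2) by simp
  next
    case (Cons p xs)
    obtain a b where p: "p = (a, b)" by (cases p)
    have "a * b \<in> X" using Cons.prems p by (intro assms(1)) auto
    moreover have "sum_list (map (\<lambda>(a, b). a * b) xs) \<in> X" using Cons by simp
    ultimately show ?case using assms(3) p by simp
  qed
  then show "z \<in> X" using z by simp
qed

definition wfilt :: "nat \<Rightarrow> nat rel \<Rightarrow> (nat \<Rightarrow> int) \<Rightarrow> nat \<Rightarrow> (nat, 'k::comm_ring_1) mpoly set" where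
  "wfilt n R w k = {p. \<forall>f\<in>Poly_Mapping.keys p. weak_P_partition n R f \<and> wdeg n w f \<ge> int k}"

lemma wfilt_zero [simp]: "0 \<in> wfilt n R w k"
  unfolding wfilt_def by simp

lemma wfilt_add: "p \<in> wfilt n R w k \<Longrightarrow> q \<in> wfilt n R w k \<Longrightarrow> p + q \<in> wfilt n R w k"
proof -
  assume p: "p \<in> wfilt n R w k" and q: "q \<in> wfilt n R w k"
  show ?thesis unfolding wfilt_def
  proof (rule CollectI, rule ballI)
    fix f assume "f \<in> Poly_Mapping.keys (p + q)"
    then have "f \<in> Poly_Mapping.keys p \<or> f \<in> Poly_Mapping.keys q" using keys_add[of p q] by auto
    then show "weak_P_partition n R f \<and> int k \<le> wdeg n w f" using p q unfolding wfilt_def by auto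
  qed
qed

lemma wfilt_uminus: "p \<in> wfilt n R w k \<Longrightarrow> - p \<in> wfilt n R w k"
  unfolding wfilt_def by simp

lemma wfilt_diff: "p \<in> wfilt n R w k \<Longrightarrow> q \<in> wfilt n R w k \<Longrightarrow> p - q \<in> wfilt n R w k"
  using wfilt_add[OF _ wfilt_uminus, of p n R w k q] by simp

lemma wfilt_antimono: "k \<le> j \<Longrightarrow> p \<in> wfilt n R w j \<Longrightarrow> p \<in> wfilt n R w k"
proof -
  assume kj: "k \<le> j" and p: "p \<in> wfilt n R w j"
  have "int k \<le> int j" using kj by simp
  then show ?thesis using p unfolding wfilt_def by fastforce
qed

lemma wfilt_mult:
  assumes "p \<in> wfilt n R w i" "q \<in> wfilt n R w j" shows "p * q \<in> wfilt n R w (i + j)"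
  unfolding wfilt_def
proof (rule CollectI, rule ballI)
  fix f assume "f \<in> Poly_Mapping.keys (p * q)"
  then obtain a b where ab: "f = a + b" "a \<in> Poly_Mapping.keys p" "b \<in> Poly_Mapping.keys q"
    using keys_mult[of p q] by blast
  then show "weak_P_partition n R f \<and> int (i + j) \<le> wdeg n w f"
  proof -
    have "weak_P_partition n R a" "int i \<le> wdeg n w a" using assms(1) ab(2) unfolding wfilt_def by auto
    moreover have "weak_P_partition n R b" "int j \<le> wdeg n w b" using assms(2) ab(3) unfolding wfilt_def by auto
    ultimately show ?thesis unfolding ab(1) wdeg_add by (auto intro: weak_P_partition_add)
  qed
qed

lemma wfilt_single: "weak_P_partition n R f \<Longrightarrow> wdeg n w f \<ge> int k \<Longrightarrow> Poly_Mapping.single f c \<in> wfilt n R w k"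
  unfolding wfilt_def by simp

lemma wfilt_sum: "finite S \<Longrightarrow> (\<And>s. s \<in> S \<Longrightarrow> f s \<in> wfilt n R w k) \<Longrightarrow> (\<Sum>s\<in>S. f s) \<in> wfilt n R w k"
proof (induction S rule: finite_induct)
  case empty then show ?case by simp
next
  case (insert s S)
  have "f s \<in> wfilt n R w k" "sum f S \<in> wfilt n R w k" using insert by auto
  then show ?case using wfilt_add[of "f s" n R w k "sum f S"] insert(1,2) by simp
qed

lemma R_P_eq_wfilt_0:
  assumes po: "partial_order_on {1..n} R" and ic: "intersections_connected n R"
    and w: "unit_weight n R w"
  shows "(R_P n R :: (nat, 'k::comm_ring_1) mpoly set) = wfilt n R w 0"
  unfolding R_P_def kspan_pmonom wfilt_def using wdeg_bounds(1)[OF po ic w] by auto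

lemma max_ideal_eq_wfilt_1:
  assumes po: "partial_order_on {1..n} R" and ic: "intersections_connected n R"
    and w: "unit_weight n R w"
  shows "(max_ideal n R :: (nat, 'k::comm_ring_1) mpoly set) = wfilt n R w 1"
  unfolding max_ideal_def kspan_pmonom wfilt_def using wdeg_bounds(2)[OF po ic w] by auto

lemma set_prod_wfilt_subset: "set_prod (wfilt n R w i) (wfilt n R w j) \<subseteq> wfilt n R w (i + j)"
  by (rule set_prod_subset) (simp_all add: wfilt_mult wfilt_add)

text \<open>Each connected ideal has weight one, so splitting off \<open>x\<^sup>J\<close> lowers the weight by one.\<close>
lemma single_in_set_prod_wfilt:
  assumes po: "partial_order_on {1..n} R" and ic: "intersections_connected n R"
    and w: "unit_weight n R w"
    and f: "weak_P_partition n R f" "wdeg n w f \<ge> int (Suc k)"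
  shows "Poly_Mapping.single f c \<in> set_prod (wfilt n R w 1) (wfilt n R w k :: (nat, 'k::comm_ring_1) mpoly set)"
proof -
  have "f \<noteq> 0" using f(2) by auto
  then obtain J g where J: "J \<in> J_conn n R" and g: "weak_P_partition n R g" and fe: "f = set_exp J + g"
    using weak_P_partition_split[OF po f(1)] by blast
  have oJ: "order_ideal n R J" using J unfolding J_conn_def by auto
  have wJ: "wdeg n w (set_exp J) = 1"
    using wdeg_single_set[OF order_ideal_subset[OF oJ], of w 1] sum_unit_weight_J_conn[OF po ic w J]
    unfolding set_exp_def by simp
  have "Poly_Mapping.single (set_exp J) 1 \<in> (wfilt n R w 1 :: (nat, 'k) mpoly set)"
    using weak_P_partition_set_exp[OF oJ] wJ by (intro wfilt_single) auto
  moreover have "Poly_Mapping.single g c \<in> (wfilt n R w k :: (nat, 'k) mpoly set)"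
    using g f(2) wJ unfolding fe wdeg_add by (intro wfilt_single) auto
  ultimately show ?thesis unfolding fe by (metis set_prod_mult mult_single mult_1)
qed

lemma mpow_eq_wfilt:
  assumes po: "partial_order_on {1..n} R" and ic: "intersections_connected n R"
    and w: "unit_weight n R w"
  shows "(mpow n R k :: (nat, 'k::comm_ring_1) mpoly set) = wfilt n R w k"
proof (induction k)
  case 0
  show ?case using R_P_eq_wfilt_0[OF po ic w] by simp
next
  case (Suc k)
  have "(wfilt n R w (Suc k) :: (nat, 'k) mpoly set) \<subseteq> set_prod (wfilt n R w 1) (wfilt n R w k)"
  proof
    fix p :: "(nat, 'k) mpoly" assume p: "p \<in> wfilt n R w (Suc k)"
    have "(\<Sum>f\<in>Poly_Mapping.keys p. Poly_Mapping.single f (Poly_Mapping.lookup p f))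
        \<in> set_prod (wfilt n R w 1) (wfilt n R w k)"
      using p single_in_set_prod_wfilt[OF po ic w] unfolding wfilt_def by (intro set_prod_sum) auto
    then show "p \<in> set_prod (wfilt n R w 1) (wfilt n R w k)" unfolding sum_single_keys .
  qed
  then show ?case unfolding mpow.simps Suc.IH max_ideal_eq_wfilt_1[OF po ic w]
    using set_prod_wfilt_subset[of n R w 1 k] by auto
qed

section \<open>The kernel of \<open>gr(\<phi>)\<close>\<close>

lemma gr_zero: "\<zero>\<^bsub>grR_P n R\<^esub> = (\<lambda>i. gcos (mpow n R) i 0)"
  unfolding grR_P_def gr_ring_def by simp

lemma homogeneous_I_gr_P: "homogeneous_ideal (I_gr_P n R :: (nat set, 'k::comm_ring_1) mpoly set)"
  unfolding homogeneous_ideal_def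
proof (intro ballI allI)
  fix g :: "(nat set, 'k) mpoly" and e
  assume "g \<in> I_gr_P n R"
  then have gS: "g \<in> S_ring n R" and "gr_phi n R g = (\<lambda>i. gcos (mpow n R) i 0)"
    unfolding I_gr_P_def gr_zero by auto
  then have "gr_phi n R (hom_comp e g) d = gcos (mpow n R) d 0" for d
    unfolding gr_phi_def by (cases "d = e") (simp_all add: hom_comp_hom_comp fun_eq_iff)
  then have "gr_phi n R (hom_comp e g) = (\<lambda>i. gcos (mpow n R) i 0)" by blast
  then show "hom_comp e g \<in> I_gr_P n R" unfolding I_gr_P_def gr_zero using hom_comp_in_S_ring[OF gS] by auto
qed

lemma gcos_zeroD:
  assumes "0 \<in> M (Suc d)" "gcos M d x = gcos M d 0"
  shows "x \<in> M (Suc d)"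
proof -
  have "x \<in> gcos M d x" using assms(1) unfolding gcos_def by (intro CollectI exI[of _ 0]) simp
  then have "x \<in> gcos M d 0" using assms(2) by simp
  then show ?thesis unfolding gcos_def by auto
qed

lemma phi_hom_comp_eq_0_if_in_wfilt_Suc:
  assumes deg: "\<forall>m\<in>Poly_Mapping.keys g. int (mdeg m) = wdeg n w (phi_exp m)"
    and "(phi (hom_comp d g) :: (nat, 'k::comm_ring_1) mpoly) \<in> wfilt n R w (Suc d)"
  shows "(phi (hom_comp d g) :: (nat, 'k) mpoly) = 0"
proof (rule poly_mapping_eqI, rule ccontr)
  fix f assume ne: "Poly_Mapping.lookup (phi (hom_comp d g) :: (nat, 'k) mpoly) f \<noteq> Poly_Mapping.lookup 0 f"
  then have "wdeg n w f \<ge> int (Suc d)" using assms(2) unfolding wfilt_def by (auto simp: in_keys_iff)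
  moreover have "wdeg n w f = int d" using ne lookup_phi_hom_comp[OF deg, of d f] by (auto split: if_splits)
  ultimately show False by simp
qed

lemma phi_eq_0_if_phi_hom_comp_eq_0:
  assumes deg: "\<forall>m\<in>Poly_Mapping.keys g. int (mdeg m) = wdeg n w (phi_exp m)"
    and hom: "\<And>d. (phi (hom_comp d g) :: (nat, 'k::comm_ring_1) mpoly) = 0"
  shows "(phi g :: (nat, 'k) mpoly) = 0"
proof (rule poly_mapping_eqI)
  fix f
  show "Poly_Mapping.lookup (phi g :: (nat, 'k) mpoly) f = Poly_Mapping.lookup 0 f"
  proof (cases "wdeg n w f \<ge> 0")
    case True
    then show ?thesis using lookup_phi_hom_comp[OF deg, of "nat (wdeg n w f)" f] hom by simp
  next
    case False
    then have no_terms: "{m\<in>Poly_Mapping.keys g. phi_exp m = f} = {}" using deg by force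
    show ?thesis unfolding lookup_phi no_terms by simp
  qed
qed

lemma I_gr_P_eq_I_P:
  assumes po: "partial_order_on {1..n} R" and ic: "intersections_connected n R"
  shows "(I_gr_P n R :: (nat set, 'k::comm_ring_1) mpoly set) = I_P n R"
proof (intro equalityI subsetI)
  obtain w where w: "unit_weight n R w" using exists_unit_weight[OF po] by blast
  have filt: "(mpow n R :: nat \<Rightarrow> (nat, 'k) mpoly set) = wfilt n R w"
    using mpow_eq_wfilt[OF po ic w] by blast
  fix g :: "(nat set, 'k) mpoly" assume "g \<in> I_gr_P n R"
  then have gS: "g \<in> S_ring n R" and "gr_phi n R g = (\<lambda>i. gcos (wfilt n R w) i 0)"
    unfolding I_gr_P_def gr_zero filt by auto
  then have "(phi (hom_comp d g) :: (nat, 'k) mpoly) \<in> wfilt n R w (Suc d)" for d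
    unfolding gr_phi_def filt by (intro gcos_zeroD[OF wfilt_zero]) meson
  moreover have deg: "\<forall>m\<in>Poly_Mapping.keys g. int (mdeg m) = wdeg n w (phi_exp m)"
    using mdeg_eq_wdeg_phi_exp[OF po ic w] gS unfolding S_ring_def by auto
  ultimately have "phi g = (0 :: (nat, 'k) mpoly)"
    by (intro phi_eq_0_if_phi_hom_comp_eq_0[OF deg] phi_hom_comp_eq_0_if_in_wfilt_Suc[OF deg])
  then show "g \<in> I_P n R" unfolding I_P_def using gS by simp
next
  fix g :: "(nat set, 'k) mpoly" assume g: "g \<in> I_P n R"
  then have "phi (hom_comp d g) = (0 :: (nat, 'k) mpoly)" for d
    using homogeneous_if_intersections_connected[OF po ic] unfolding homogeneous_ideal_def I_P_def
    by blast
  then show "g \<in> I_gr_P n R" using g unfolding I_gr_P_def I_P_def gr_zero gr_phi_def by simp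
qed

section \<open>The isomorphism \<open>gr(R_P) \<cong> R_P\<close>\<close>

definition wcomp :: "nat \<Rightarrow> (nat \<Rightarrow> int) \<Rightarrow> nat \<Rightarrow> (nat, 'k::comm_ring_1) mpoly \<Rightarrow> (nat, 'k) mpoly" where
  "wcomp n w d p = (\<Sum>f\<in>{f\<in>Poly_Mapping.keys p. wdeg n w f = int d}. Poly_Mapping.single f (Poly_Mapping.lookup p f))"

definition whomog :: "nat \<Rightarrow> (nat \<Rightarrow> int) \<Rightarrow> nat \<Rightarrow> (nat, 'k::comm_ring_1) mpoly \<Rightarrow> bool" where
  "whomog n w d x \<longleftrightarrow> (\<forall>f\<in>Poly_Mapping.keys x. wdeg n w f = int d)"

lemma lookup_wcomp:
  "Poly_Mapping.lookup (wcomp n w d p) f = (if wdeg n w f = int d then Poly_Mapping.lookup p f else 0)"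
  unfolding wcomp_def lookup_sum lookup_single
  by (auto simp: when_def sum.inter_filter in_keys_iff)

lemma wcomp_add: "wcomp n w d (x + y) = wcomp n w d x + wcomp n w d y"
  by (rule poly_mapping_eqI) (simp add: lookup_wcomp lookup_add)

lemma wcomp_diff: "wcomp n w d (x - y) = wcomp n w d x - wcomp n w d y"
  by (rule poly_mapping_eqI) (simp add: lookup_wcomp lookup_minus)

lemma wcomp_zero [simp]: "wcomp n w d 0 = 0"
  by (rule poly_mapping_eqI) (simp add: lookup_wcomp)

lemma wcomp_sum: "finite S \<Longrightarrow> wcomp n w d (\<Sum>i\<in>S. x i) = (\<Sum>i\<in>S. wcomp n w d (x i))"
  by (induction S rule: finite_induct) (auto simp: wcomp_add)

lemma whomog_wcomp: "whomog n w d (wcomp n w d x)"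
  unfolding whomog_def by (auto simp: in_keys_iff lookup_wcomp split: if_splits)

lemma wcomp_whomog:
  assumes "whomog n w e x" shows "wcomp n w d x = (if d = e then x else 0)"
proof (rule poly_mapping_eqI)
  fix f
  show "Poly_Mapping.lookup (wcomp n w d x) f = Poly_Mapping.lookup (if d = e then x else 0) f"
  proof (cases "f \<in> Poly_Mapping.keys x")
    case True
    then have "wdeg n w f = int e" using assms unfolding whomog_def by auto
    then show ?thesis by (simp add: lookup_wcomp)
  next
    case False
    then have "Poly_Mapping.lookup x f = 0" by (simp add: in_keys_iff)
    then show ?thesis by (simp add: lookup_wcomp)
  qed
qed

lemma wcomp_wcomp: "wcomp n w d (wcomp n w i x) = (if d = i then wcomp n w i x else 0)"
  by (rule wcomp_whomog[OF whomog_wcomp])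

lemma whomog_mult:
  assumes "whomog n w i a" "whomog n w j b" shows "whomog n w (i + j) (a * b)"
  unfolding whomog_def
proof
  fix f assume "f \<in> Poly_Mapping.keys (a * b)"
  then obtain x y where "f = x + y" "x \<in> Poly_Mapping.keys a" "y \<in> Poly_Mapping.keys b"
    using keys_mult[of a b] by blast
  then show "wdeg n w f = int (i + j)" using assms unfolding whomog_def by (simp add: wdeg_add)
qed

lemma wcomp_wfilt_Suc:
  assumes "x \<in> wfilt n R w (Suc d)" shows "wcomp n w d x = 0"
proof (rule poly_mapping_eqI)
  fix f
  show "Poly_Mapping.lookup (wcomp n w d x) f = Poly_Mapping.lookup 0 f"
  proof (cases "f \<in> Poly_Mapping.keys x")
    case True
    then have "wdeg n w f \<ge> int (Suc d)" using assms unfolding wfilt_def by auto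
    then show ?thesis by (simp add: lookup_wcomp)
  next
    case False
    then show ?thesis by (simp add: lookup_wcomp in_keys_iff)
  qed
qed

lemma wcomp_in_wfilt:
  assumes "x \<in> wfilt n R w 0" shows "wcomp n w d x \<in> wfilt n R w d"
  unfolding wfilt_def
proof (rule CollectI, rule ballI)
  fix f assume f: "f \<in> Poly_Mapping.keys (wcomp n w d x)"
  then have "Poly_Mapping.lookup (wcomp n w d x) f \<noteq> 0" by (simp add: in_keys_iff)
  then have "wdeg n w f = int d" "f \<in> Poly_Mapping.keys x" by (auto simp: lookup_wcomp in_keys_iff split: if_splits)
  then show "weak_P_partition n R f \<and> int d \<le> wdeg n w f" using assms unfolding wfilt_def by auto
qed

lemma wfilt_Suc_if_wcomp_zero:
  assumes "x \<in> wfilt n R w d" "wcomp n w d x = 0" shows "x \<in> wfilt n R w (Suc d)"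
  unfolding wfilt_def
proof (rule CollectI, rule ballI)
  fix f assume f: "f \<in> Poly_Mapping.keys x"
  have "wdeg n w f \<noteq> int d"
  proof
    assume "wdeg n w f = int d"
    then have "Poly_Mapping.lookup (wcomp n w d x) f = Poly_Mapping.lookup x f" by (simp add: lookup_wcomp)
    then show False using assms(2) f by (simp add: in_keys_iff)
  qed
  then show "weak_P_partition n R f \<and> int (Suc d) \<le> wdeg n w f" using assms(1) f unfolding wfilt_def by auto
qed

lemma wcomp_eqI:
  assumes "p \<in> wfilt n R w 0" "q \<in> wfilt n R w 0" "\<And>d. wcomp n w d p = wcomp n w d q"
  shows "p = q"
proof (rule poly_mapping_eqI)
  fix f
  show "Poly_Mapping.lookup p f = Poly_Mapping.lookup q f"
  proof (cases "f \<in> Poly_Mapping.keys p \<union> Poly_Mapping.keys q")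
    case True
    then have "wdeg n w f \<ge> 0" using assms(1,2) unfolding wfilt_def by auto
    then have e: "wdeg n w f = int (nat (wdeg n w f))" by simp
    have "Poly_Mapping.lookup (wcomp n w (nat (wdeg n w f)) p) f = Poly_Mapping.lookup (wcomp n w (nat (wdeg n w f)) q) f"
      using assms(3) by simp
    then show ?thesis using e by (simp add: lookup_wcomp)
  next
    case False
    then show ?thesis by (simp add: in_keys_iff)
  qed
qed

lemma wcomp_mult:
  assumes a: "a \<in> wfilt n R w i" and b: "b \<in> wfilt n R w j"
  shows "wcomp n w (i + j) (a * b) = wcomp n w i a * wcomp n w j b"
proof -
  define pa where "pa = wcomp n w i a"
  define pb where "pb = wcomp n w j b"
  have a0: "a \<in> wfilt n R w 0" using wfilt_antimono[OF _ a] by simp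
  have b0: "b \<in> wfilt n R w 0" using wfilt_antimono[OF _ b] by simp
  have pai: "pa \<in> wfilt n R w i" unfolding pa_def by (rule wcomp_in_wfilt[OF a0])
  have pbj: "pb \<in> wfilt n R w j" unfolding pb_def by (rule wcomp_in_wfilt[OF b0])
  have a': "a - pa \<in> wfilt n R w (Suc i)"
  proof (rule wfilt_Suc_if_wcomp_zero)
    show "a - pa \<in> wfilt n R w i" using wfilt_diff[OF a pai] .
    show "wcomp n w i (a - pa) = 0" unfolding wcomp_diff pa_def wcomp_wcomp by simp
  qed
  have b': "b - pb \<in> wfilt n R w (Suc j)"
  proof (rule wfilt_Suc_if_wcomp_zero)
    show "b - pb \<in> wfilt n R w j" using wfilt_diff[OF b pbj] .
    show "wcomp n w j (b - pb) = 0" unfolding wcomp_diff pb_def wcomp_wcomp by simp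
  qed
  have eq: "a * b = pa * pb + pa * (b - pb) + (a - pa) * b" by (simp add: algebra_simps)
  have t2: "pa * (b - pb) \<in> wfilt n R w (Suc (i + j))" using wfilt_mult[OF pai b'] by simp
  have t3: "(a - pa) * b \<in> wfilt n R w (Suc (i + j))" using wfilt_mult[OF a' b] by simp
  have hpp: "whomog n w (i + j) (pa * pb)" unfolding pa_def pb_def by (intro whomog_mult whomog_wcomp)
  have "wcomp n w (i + j) (a * b) = pa * pb"
    unfolding eq wcomp_add wcomp_wfilt_Suc[OF t2] wcomp_wfilt_Suc[OF t3] wcomp_whomog[OF hpp] by simp
  then show ?thesis unfolding pa_def pb_def .
qed

lemma gcos_self: "a \<in> gcos (wfilt n R w) d a"
  unfolding gcos_def by (intro CollectI exI[of _ 0]) simp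

lemma grep_gcos: "\<exists>b\<in>wfilt n R w (Suc d). grep (gcos (wfilt n R w) d a) = a + b"
proof -
  have "grep (gcos (wfilt n R w) d a) \<in> gcos (wfilt n R w) d a"
    unfolding grep_def by (rule someI[where P="\<lambda>x. x \<in> gcos (wfilt n R w) d a", OF gcos_self])
  then show ?thesis unfolding gcos_def by auto
qed

lemma gcos_eqI:
  assumes "a - a' \<in> wfilt n R w (Suc d)"
  shows "gcos (wfilt n R w) d a = gcos (wfilt n R w) d a'"
  unfolding gcos_def
proof (intro equalityI subsetI)
  fix x assume "x \<in> {a + b |b. b \<in> wfilt n R w (Suc d)}"
  then obtain b where b: "x = a + b" "b \<in> wfilt n R w (Suc d)" by auto
  have "a - a' + b \<in> wfilt n R w (Suc d)" using wfilt_add[OF assms b(2)] .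
  moreover have "x = a' + (a - a' + b)" using b(1) by simp
  ultimately show "x \<in> {a' + b |b. b \<in> wfilt n R w (Suc d)}" by blast
next
  fix x assume "x \<in> {a' + b |b. b \<in> wfilt n R w (Suc d)}"
  then obtain b where b: "x = a' + b" "b \<in> wfilt n R w (Suc d)" by auto
  have "b - (a - a') \<in> wfilt n R w (Suc d)" using wfilt_diff[OF b(2) assms] .
  moreover have "x = a + (b - (a - a'))" using b(1) by simp
  ultimately show "x \<in> {a + b |b. b \<in> wfilt n R w (Suc d)}" by blast
qed

text \<open>Since \<open>m\<^sup>d\<close> consists of the polynomials of weighted degree at least \<open>d\<close>,
  taking the weighted-degree-\<open>d\<close> component of a representative identifies
  \<open>m\<^sup>d/m\<^sup>d\<^sup>+\<^sup>1\<close> with the weighted-degree-\<open>d\<close> part of \<open>R_P\<close>.\<close>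
definition gr_to_R_P :: "nat \<Rightarrow> nat rel \<Rightarrow> (nat \<Rightarrow> int) \<Rightarrow> (nat \<Rightarrow> (nat, 'k::comm_ring_1) mpoly set) \<Rightarrow> (nat, 'k) mpoly" where
  "gr_to_R_P n R w F = (\<Sum>i\<in>{i. F i \<noteq> gcos (wfilt n R w) i 0}. wcomp n w i (grep (F i)))"

lemma carrier_gr_ring_iff:
  "F \<in> carrier (gr_ring M) \<longleftrightarrow> (\<forall>i. \<exists>a\<in>M i. F i = gcos M i a) \<and> finite {i. F i \<noteq> gcos M i 0}"
  unfolding gr_ring_def by simp

lemma gr_mult_eq:
  "(F \<otimes>\<^bsub>gr_ring M\<^esub> G) = (\<lambda>d. gcos M d (\<Sum>i\<le>d. grep (F i) * grep (G (d - i))))"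
  unfolding gr_ring_def by simp

lemma gr_add_eq:
  "(F \<oplus>\<^bsub>gr_ring M\<^esub> G) = (\<lambda>i. gcos M i (grep (F i) + grep (G i)))"
  unfolding gr_ring_def by simp

lemma gr_one_eq:
  "\<one>\<^bsub>gr_ring M\<^esub> = gr_const M 1"
  unfolding gr_ring_def gr_const_def pconst_def by (auto simp: fun_eq_iff)

lemma grep_in_wfilt:
  fixes F :: "nat \<Rightarrow> (nat, 'k::comm_ring_1) mpoly set"
  assumes "F \<in> carrier (gr_ring (wfilt n R w))" shows "grep (F i) \<in> wfilt n R w i"
proof -
  obtain a where a: "a \<in> wfilt n R w i" "F i = gcos (wfilt n R w) i a" using assms unfolding carrier_gr_ring_iff by blast
  obtain b :: "(nat, 'k) mpoly" where b: "b \<in> wfilt n R w (Suc i)" "grep (gcos (wfilt n R w) i a) = a + b" using grep_gcos by blast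
  have "b \<in> wfilt n R w i" using wfilt_antimono[OF _ b(1)] by simp
  then show ?thesis using a(2) b(2) wfilt_add[OF a(1)] by simp
qed

lemma gcos_grep:
  fixes F :: "nat \<Rightarrow> (nat, 'k::comm_ring_1) mpoly set"
  assumes "F \<in> carrier (gr_ring (wfilt n R w))" shows "F i = gcos (wfilt n R w) i (grep (F i))"
proof -
  obtain a where a: "a \<in> wfilt n R w i" "F i = gcos (wfilt n R w) i a" using assms unfolding carrier_gr_ring_iff by blast
  obtain b :: "(nat, 'k) mpoly" where b: "b \<in> wfilt n R w (Suc i)" "grep (gcos (wfilt n R w) i a) = a + b" using grep_gcos by blast
  have "a - (a + b) \<in> wfilt n R w (Suc i)" using wfilt_uminus[OF b(1)] by simp
  then have "gcos (wfilt n R w) i a = gcos (wfilt n R w) i (a + b)" by (rule gcos_eqI)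
  then show ?thesis using a(2) b(2) by simp
qed

lemma grep_in_wfilt_Suc:
  fixes F :: "nat \<Rightarrow> (nat, 'k::comm_ring_1) mpoly set"
  assumes "F i = gcos (wfilt n R w) i 0" shows "grep (F i) \<in> wfilt n R w (Suc i)"
proof -
  obtain b :: "(nat, 'k) mpoly" where b: "b \<in> wfilt n R w (Suc i)" "grep (gcos (wfilt n R w) i 0) = 0 + b" using grep_gcos by blast
  have "grep (F i) = b" using assms b(2) by simp
  then show ?thesis using b(1) by simp
qed

lemma gr_to_R_P_superset:
  assumes F: "F \<in> carrier (gr_ring (wfilt n R w))" and T: "finite T" "{i. F i \<noteq> gcos (wfilt n R w) i 0} \<subseteq> T"
  shows "gr_to_R_P n R w F = (\<Sum>i\<in>T. wcomp n w i (grep (F i)))"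
  unfolding gr_to_R_P_def
proof (rule sum.mono_neutral_left[OF T])
  show "\<forall>i\<in>T - {i. F i \<noteq> gcos (wfilt n R w) i 0}. wcomp n w i (grep (F i)) = 0"
  proof
    fix i assume "i \<in> T - {i. F i \<noteq> gcos (wfilt n R w) i 0}"
    then have "F i = gcos (wfilt n R w) i 0" by simp
    then show "wcomp n w i (grep (F i)) = 0" by (rule wcomp_wfilt_Suc[OF grep_in_wfilt_Suc])
  qed
qed

lemma gr_to_R_P_in_wfilt:
  assumes F: "F \<in> carrier (gr_ring (wfilt n R w))" shows "gr_to_R_P n R w F \<in> wfilt n R w 0"
  unfolding gr_to_R_P_def
proof (rule wfilt_sum)
  show "finite {i. F i \<noteq> gcos (wfilt n R w) i 0}" using F unfolding carrier_gr_ring_iff by blast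
  fix i
  have "grep (F i) \<in> wfilt n R w 0" using wfilt_antimono[OF _ grep_in_wfilt[OF F]] by simp
  then have "wcomp n w i (grep (F i)) \<in> wfilt n R w i" by (rule wcomp_in_wfilt)
  then show "wcomp n w i (grep (F i)) \<in> wfilt n R w 0" using wfilt_antimono[of 0 i] by simp
qed

lemma wcomp_gr_to_R_P:
  assumes F: "F \<in> carrier (gr_ring (wfilt n R w))" shows "wcomp n w d (gr_to_R_P n R w F) = wcomp n w d (grep (F d))"
proof -
  let ?S = "{i. F i \<noteq> gcos (wfilt n R w) i 0}"
  have fS: "finite ?S" using F unfolding carrier_gr_ring_iff by blast
  have "gr_to_R_P n R w F = (\<Sum>i\<in>insert d ?S. wcomp n w i (grep (F i)))"
    by (rule gr_to_R_P_superset[OF F]) (use fS in auto)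
  then have "wcomp n w d (gr_to_R_P n R w F) = (\<Sum>i\<in>insert d ?S. if d = i then wcomp n w i (grep (F i)) else 0)"
    using fS by (simp add: wcomp_sum wcomp_wcomp)
  also have "\<dots> = wcomp n w d (grep (F d))" using fS by simp
  finally show ?thesis .
qed

lemma wcomp_grep_gcos:
  fixes a :: "(nat, 'k::comm_ring_1) mpoly"
  shows "wcomp n w d (grep (gcos (wfilt n R w) d a)) = wcomp n w d a"
proof -
  obtain b :: "(nat, 'k) mpoly" where b: "b \<in> wfilt n R w (Suc d)" "grep (gcos (wfilt n R w) d a) = a + b" using grep_gcos by blast
  then show ?thesis by (simp add: wcomp_add wcomp_wfilt_Suc)
qed

lemma gr_eventually_zero:
  assumes F: "F \<in> carrier (gr_ring (wfilt n R w))"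
  obtains N where "\<And>i. i \<ge> N \<Longrightarrow> F i = gcos (wfilt n R w) i 0"
proof -
  have "finite {i. F i \<noteq> gcos (wfilt n R w) i 0}" using F unfolding carrier_gr_ring_iff by blast
  then obtain N where N: "\<forall>i\<in>{i. F i \<noteq> gcos (wfilt n R w) i 0}. i < N" using finite_nat_set_iff_bounded by blast
  have "F i = gcos (wfilt n R w) i 0" if "i \<ge> N" for i using N that by (meson leD mem_Collect_eq)
  then show ?thesis by (rule that)
qed

lemma gr_mult_closed:
  assumes F: "F \<in> carrier (gr_ring (wfilt n R w))" and G: "G \<in> carrier (gr_ring (wfilt n R w))"
  shows "(\<lambda>d. gcos (wfilt n R w) d (\<Sum>i\<le>d. grep (F i) * grep (G (d - i)))) \<in> carrier (gr_ring (wfilt n R w))"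
proof -
  obtain NF where NF: "\<And>i. i \<ge> NF \<Longrightarrow> F i = gcos (wfilt n R w) i 0" using gr_eventually_zero[OF F] by blast
  obtain NG where NG: "\<And>i. i \<ge> NG \<Longrightarrow> G i = gcos (wfilt n R w) i 0" using gr_eventually_zero[OF G] by blast
  have inM: "(\<Sum>i\<le>d. grep (F i) * grep (G (d - i))) \<in> wfilt n R w d" for d
  proof (rule wfilt_sum)
    fix i assume "i \<in> {..d}"
    then have "i + (d - i) = d" by simp
    then show "grep (F i) * grep (G (d - i)) \<in> wfilt n R w d"
      using wfilt_mult[OF grep_in_wfilt[OF F] grep_in_wfilt[OF G], of i "d - i"] by simp
  qed simp
  have out: "(\<Sum>i\<le>d. grep (F i) * grep (G (d - i))) \<in> wfilt n R w (Suc d)" if d: "d \<ge> NF + NG" for d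
  proof (rule wfilt_sum)
    fix i assume i: "i \<in> {..d}"
    show "grep (F i) * grep (G (d - i)) \<in> wfilt n R w (Suc d)"
    proof (cases "i \<ge> NF")
      case True
      have "Suc i + (d - i) = Suc d" using i by simp
      then show ?thesis using wfilt_mult[OF grep_in_wfilt_Suc[where F=F and i=i, OF NF[OF True]] grep_in_wfilt[OF G], of "d - i"] by simp
    next
      case False
      then have "d - i \<ge> NG" using d by simp
      moreover have "i + Suc (d - i) = Suc d" using i by simp
      ultimately show ?thesis using wfilt_mult[OF grep_in_wfilt[OF F] grep_in_wfilt_Suc[where F=G and i="d - i", OF NG], of i] by simp
    qed
  qed simp
  have "{d. gcos (wfilt n R w) d (\<Sum>i\<le>d. grep (F i) * grep (G (d - i))) \<noteq> gcos (wfilt n R w) d 0} \<subseteq> {..<NF + NG}"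
  proof
    fix d assume d: "d \<in> {d. gcos (wfilt n R w) d (\<Sum>i\<le>d. grep (F i) * grep (G (d - i))) \<noteq> gcos (wfilt n R w) d 0}"
    show "d \<in> {..<NF + NG}"
    proof (rule ccontr)
      assume "d \<notin> {..<NF + NG}"
      then have "(\<Sum>i\<le>d. grep (F i) * grep (G (d - i))) - 0 \<in> wfilt n R w (Suc d)" using out by simp
      then have "gcos (wfilt n R w) d (\<Sum>i\<le>d. grep (F i) * grep (G (d - i))) = gcos (wfilt n R w) d 0"
        by (rule gcos_eqI)
      then show False using d by simp
    qed
  qed
  then have "finite {d. gcos (wfilt n R w) d (\<Sum>i\<le>d. grep (F i) * grep (G (d - i))) \<noteq> gcos (wfilt n R w) d 0}"
    by (rule finite_subset) simp
  then show ?thesis unfolding carrier_gr_ring_iff using inM by blast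
qed

lemma sum_antidiagonal:
  fixes X :: "nat \<Rightarrow> nat \<Rightarrow> 'a::comm_monoid_add"
  assumes "d \<le> N"
  shows "(\<Sum>i\<le>N. \<Sum>j\<le>N. if d = i + j then X i j else 0) = (\<Sum>i\<le>d. X i (d - i))"
proof -
  have inner: "(\<Sum>j\<le>N. if d = i + j then X i j else 0) = (if i \<le> d then X i (d - i) else 0)" for i
  proof (cases "i \<le> d")
    case True
    have "(\<Sum>j\<le>N. if d = i + j then X i j else 0) = (\<Sum>j\<le>N. if j = d - i then X i j else 0)"
      using True by (intro sum.cong) auto
    also have "\<dots> = X i (d - i)"
    proof -
      have "d - i \<in> {..N}" using assms by auto
      then show ?thesis by simp
    qed
    finally show ?thesis using True by simp
  next
    case False
    then show ?thesis by (intro trans[OF sum.neutral]) auto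
  qed
  have "(\<Sum>i\<le>N. \<Sum>j\<le>N. if d = i + j then X i j else 0) = (\<Sum>i\<le>N. if i \<le> d then X i (d - i) else 0)"
    using inner by simp
  also have "\<dots> = (\<Sum>i\<in>{i\<in>{..N}. i \<le> d}. X i (d - i))" by (rule sum.inter_filter[symmetric]) simp
  also have "{i\<in>{..N}. i \<le> d} = {..d}" using assms by auto
  finally show ?thesis .
qed

lemma wcomp_mult_sums:
  assumes "\<And>i. whomog n w i (p i)" "\<And>j. whomog n w j (q j)" "d \<le> N"
  shows "wcomp n w d ((\<Sum>i\<le>N. p i) * (\<Sum>j\<le>N. q j)) = (\<Sum>i\<le>d. p i * q (d - i))"
proof -
  have "wcomp n w d (p i * q j) = (if d = i + j then p i * q j else 0)" for i j
    using wcomp_whomog[OF whomog_mult[OF assms(1,2)]] by simp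
  then have "wcomp n w d ((\<Sum>i\<le>N. p i) * (\<Sum>j\<le>N. q j))
      = (\<Sum>i\<le>N. \<Sum>j\<le>N. if d = i + j then p i * q j else 0)"
    by (simp add: sum_product wcomp_sum)
  also have "\<dots> = (\<Sum>i\<le>d. p i * q (d - i))" by (rule sum_antidiagonal[OF assms(3)])
  finally show ?thesis .
qed

lemma gr_to_R_P_mult:
  fixes F G :: "nat \<Rightarrow> (nat, 'k::comm_ring_1) mpoly set"
  assumes F: "F \<in> carrier (gr_ring (wfilt n R w))" and G: "G \<in> carrier (gr_ring (wfilt n R w))"
  shows "gr_to_R_P n R w (F \<otimes>\<^bsub>gr_ring (wfilt n R w)\<^esub> G) = gr_to_R_P n R w F * gr_to_R_P n R w G"
proof (rule wcomp_eqI)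
  let ?FG = "F \<otimes>\<^bsub>gr_ring (wfilt n R w)\<^esub> G"
  have FG: "?FG \<in> carrier (gr_ring (wfilt n R w))" unfolding gr_mult_eq by (rule gr_mult_closed[OF F G])
  then show "gr_to_R_P n R w ?FG \<in> wfilt n R w 0" by (rule gr_to_R_P_in_wfilt)
  show "gr_to_R_P n R w F * gr_to_R_P n R w G \<in> wfilt n R w 0"
    using wfilt_mult[OF gr_to_R_P_in_wfilt[OF F] gr_to_R_P_in_wfilt[OF G]] by simp
  define p where "p i = wcomp n w i (grep (F i))" for i
  define q where "q i = wcomp n w i (grep (G i))" for i
  fix d
  have "wcomp n w d (gr_to_R_P n R w ?FG) = wcomp n w d (grep (?FG d))"
    by (rule wcomp_gr_to_R_P[OF FG])
  also have "\<dots> = wcomp n w d (\<Sum>i\<le>d. grep (F i) * grep (G (d - i)))"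
    unfolding gr_mult_eq by (rule wcomp_grep_gcos)
  also have "\<dots> = (\<Sum>i\<le>d. p i * q (d - i))"
    unfolding wcomp_sum[OF finite_atMost] p_def q_def
    using wcomp_mult[OF grep_in_wfilt[OF F] grep_in_wfilt[OF G]] by (intro sum.cong) (metis atMost_iff le_add_diff_inverse)+
  also obtain NF NG where "\<And>i. i \<ge> NF \<Longrightarrow> F i = gcos (wfilt n R w) i 0"
    "\<And>i. i \<ge> NG \<Longrightarrow> G i = gcos (wfilt n R w) i 0"
    using gr_eventually_zero[OF F] gr_eventually_zero[OF G] by metis
  then have "gr_to_R_P n R w F = (\<Sum>i\<le>NF + NG + d. p i)" "gr_to_R_P n R w G = (\<Sum>j\<le>NF + NG + d. q j)"
    unfolding p_def q_def
    by (auto intro!: gr_to_R_P_superset[OF F] gr_to_R_P_superset[OF G] simp: not_le[symmetric])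
  then have "(\<Sum>i\<le>d. p i * q (d - i)) = wcomp n w d (gr_to_R_P n R w F * gr_to_R_P n R w G)"
    unfolding p_def q_def by (simp add: wcomp_mult_sums whomog_wcomp)
  finally show "wcomp n w d (gr_to_R_P n R w ?FG) = wcomp n w d (gr_to_R_P n R w F * gr_to_R_P n R w G)" .
qed

lemma gr_add_closed:
  fixes F G :: "nat \<Rightarrow> (nat, 'k::comm_ring_1) mpoly set"
  assumes F: "F \<in> carrier (gr_ring (wfilt n R w))" and G: "G \<in> carrier (gr_ring (wfilt n R w))"
  shows "(F \<oplus>\<^bsub>gr_ring (wfilt n R w)\<^esub> G) \<in> carrier (gr_ring (wfilt n R w))"
  unfolding gr_add_eq carrier_gr_ring_iff
proof (intro conjI allI)
  fix i
  show "\<exists>a\<in>wfilt n R w i. gcos (wfilt n R w) i (grep (F i) + grep (G i)) = gcos (wfilt n R w) i a"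
    using wfilt_add[OF grep_in_wfilt[OF F] grep_in_wfilt[OF G]] by blast
next
  have "{i. gcos (wfilt n R w) i (grep (F i) + grep (G i)) \<noteq> gcos (wfilt n R w) i 0}
      \<subseteq> {i. F i \<noteq> gcos (wfilt n R w) i 0} \<union> {i. G i \<noteq> gcos (wfilt n R w) i 0}"
  proof
    fix i assume i: "i \<in> {i. gcos (wfilt n R w) i (grep (F i) + grep (G i)) \<noteq> gcos (wfilt n R w) i 0}"
    show "i \<in> {i. F i \<noteq> gcos (wfilt n R w) i 0} \<union> {i. G i \<noteq> gcos (wfilt n R w) i 0}"
    proof (rule ccontr)
      assume "i \<notin> {i. F i \<noteq> gcos (wfilt n R w) i 0} \<union> {i. G i \<noteq> gcos (wfilt n R w) i 0}"
      then have "F i = gcos (wfilt n R w) i 0" "G i = gcos (wfilt n R w) i 0" by auto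
      then have "grep (F i) + grep (G i) - 0 \<in> wfilt n R w (Suc i)"
        using wfilt_add[OF grep_in_wfilt_Suc[where F=F] grep_in_wfilt_Suc[where F=G]] by simp
      then have "gcos (wfilt n R w) i (grep (F i) + grep (G i)) = gcos (wfilt n R w) i 0" by (rule gcos_eqI)
      then show False using i by simp
    qed
  qed
  moreover have "finite ({i. F i \<noteq> gcos (wfilt n R w) i 0} \<union> {i. G i \<noteq> gcos (wfilt n R w) i 0})"
    using F G unfolding carrier_gr_ring_iff by blast
  ultimately show "finite {i. gcos (wfilt n R w) i (grep (F i) + grep (G i)) \<noteq> gcos (wfilt n R w) i 0}"
    by (rule finite_subset)
qed

lemma gr_to_R_P_add:
  fixes F G :: "nat \<Rightarrow> (nat, 'k::comm_ring_1) mpoly set"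
  assumes F: "F \<in> carrier (gr_ring (wfilt n R w))" and G: "G \<in> carrier (gr_ring (wfilt n R w))"
  shows "gr_to_R_P n R w (F \<oplus>\<^bsub>gr_ring (wfilt n R w)\<^esub> G) = gr_to_R_P n R w F + gr_to_R_P n R w G"
proof (rule wcomp_eqI)
  have c: "(F \<oplus>\<^bsub>gr_ring (wfilt n R w)\<^esub> G) \<in> carrier (gr_ring (wfilt n R w))" by (rule gr_add_closed[OF F G])
  show "gr_to_R_P n R w (F \<oplus>\<^bsub>gr_ring (wfilt n R w)\<^esub> G) \<in> wfilt n R w 0" by (rule gr_to_R_P_in_wfilt[OF c])
  show "gr_to_R_P n R w F + gr_to_R_P n R w G \<in> wfilt n R w 0" by (rule wfilt_add[OF gr_to_R_P_in_wfilt[OF F] gr_to_R_P_in_wfilt[OF G]])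
  fix d
  show "wcomp n w d (gr_to_R_P n R w (F \<oplus>\<^bsub>gr_ring (wfilt n R w)\<^esub> G)) = wcomp n w d (gr_to_R_P n R w F + gr_to_R_P n R w G)"
    unfolding wcomp_gr_to_R_P[OF c] wcomp_add wcomp_gr_to_R_P[OF F] wcomp_gr_to_R_P[OF G]
    unfolding gr_add_eq wcomp_grep_gcos wcomp_add ..
qed

lemma pconst_in_wfilt: "pconst (c::'k::comm_ring_1) \<in> wfilt n R w 0"
  unfolding pconst_def wfilt_def by simp

lemma whomog_pconst: "whomog n w 0 (pconst (c::'k::comm_ring_1))"
  unfolding whomog_def pconst_def by (simp split: if_splits)

lemma gr_const_closed: "gr_const (wfilt n R w) (c::'k::comm_ring_1) \<in> carrier (gr_ring (wfilt n R w))"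
  unfolding carrier_gr_ring_iff gr_const_def
proof (intro conjI allI)
  fix i
  show "\<exists>a\<in>wfilt n R w i. gcos (wfilt n R w) i (if i = 0 then pconst c else 0) = gcos (wfilt n R w) i a"
    using pconst_in_wfilt by (intro bexI[of _ "if i = 0 then pconst c else 0"]) auto
  have "{i. gcos (wfilt n R w) i (if i = 0 then pconst c else 0) \<noteq> gcos (wfilt n R w) i 0} \<subseteq> {0}" by auto
  then show "finite {i. gcos (wfilt n R w) i (if i = 0 then pconst c else 0) \<noteq> gcos (wfilt n R w) i 0}"
    by (rule finite_subset) simp
qed

lemma gr_to_R_P_gr_const: "gr_to_R_P n R w (gr_const (wfilt n R w) (c::'k::comm_ring_1)) = pconst c"
proof (rule wcomp_eqI)
  show "gr_to_R_P n R w (gr_const (wfilt n R w) c) \<in> wfilt n R w 0" by (rule gr_to_R_P_in_wfilt[OF gr_const_closed])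
  show "pconst c \<in> wfilt n R w 0" by (rule pconst_in_wfilt)
  fix d
  show "wcomp n w d (gr_to_R_P n R w (gr_const (wfilt n R w) c)) = wcomp n w d (pconst c)"
    unfolding wcomp_gr_to_R_P[OF gr_const_closed] unfolding gr_const_def wcomp_grep_gcos
    by (simp add: wcomp_whomog[OF whomog_pconst])
qed

lemma gr_to_R_P_inj:
  fixes F G :: "nat \<Rightarrow> (nat, 'k::comm_ring_1) mpoly set"
  assumes F: "F \<in> carrier (gr_ring (wfilt n R w))" and G: "G \<in> carrier (gr_ring (wfilt n R w))"
    and e: "gr_to_R_P n R w F = gr_to_R_P n R w G"
  shows "F = G"
proof
  fix i
  have "wcomp n w i (grep (F i)) = wcomp n w i (grep (G i))" using wcomp_gr_to_R_P[OF F, of i] wcomp_gr_to_R_P[OF G, of i] e by simp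
  then have "wcomp n w i (grep (F i) - grep (G i)) = 0" by (simp add: wcomp_diff)
  then have "grep (F i) - grep (G i) \<in> wfilt n R w (Suc i)"
    by (intro wfilt_Suc_if_wcomp_zero wfilt_diff grep_in_wfilt F G)
  then have "gcos (wfilt n R w) i (grep (F i)) = gcos (wfilt n R w) i (grep (G i))" by (rule gcos_eqI)
  then show "F i = G i" using gcos_grep[OF F, of i] gcos_grep[OF G, of i] by simp
qed

lemma gr_to_R_P_surj:
  fixes p :: "(nat, 'k::comm_ring_1) mpoly"
  assumes p: "p \<in> wfilt n R w 0"
  shows "\<exists>F\<in>carrier (gr_ring (wfilt n R w)). gr_to_R_P n R w F = p"
proof -
  define F where "F d = gcos (wfilt n R w) d (wcomp n w d p)" for d
  have Fc: "F \<in> carrier (gr_ring (wfilt n R w))" unfolding carrier_gr_ring_iff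
  proof (intro conjI allI)
    fix i show "\<exists>a\<in>wfilt n R w i. F i = gcos (wfilt n R w) i a" unfolding F_def using wcomp_in_wfilt[OF p] by blast
    have "{i. F i \<noteq> gcos (wfilt n R w) i 0} \<subseteq> (\<lambda>f. nat (wdeg n w f)) ` Poly_Mapping.keys p"
    proof
      fix d assume d: "d \<in> {i. F i \<noteq> gcos (wfilt n R w) i 0}"
      then have "wcomp n w d p \<noteq> 0" unfolding F_def by auto
      then obtain f where "Poly_Mapping.lookup (wcomp n w d p) f \<noteq> 0" by (metis poly_mapping_eqI lookup_zero)
      then have "wdeg n w f = int d" "f \<in> Poly_Mapping.keys p" by (auto simp: lookup_wcomp in_keys_iff split: if_splits)
      then show "d \<in> (\<lambda>f. nat (wdeg n w f)) ` Poly_Mapping.keys p" by force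
    qed
    then show "finite {i. F i \<noteq> gcos (wfilt n R w) i 0}" by (rule finite_subset) simp
  qed
  have "gr_to_R_P n R w F = p"
  proof (rule wcomp_eqI[OF gr_to_R_P_in_wfilt[OF Fc] p])
    fix d show "wcomp n w d (gr_to_R_P n R w F) = wcomp n w d p"
      unfolding wcomp_gr_to_R_P[OF Fc] F_def wcomp_grep_gcos wcomp_wcomp by simp
  qed
  then show ?thesis using Fc by blast
qed

lemma gr_iso_if_intersections_connected:
  assumes po: "partial_order_on {1..n} R" and ic: "intersections_connected n R"
  shows "gr_iso_R_P n R TYPE('k::comm_ring_1)"
proof -
  obtain w where w: "unit_weight n R w" using exists_unit_weight[OF po] by blast
  have filt: "(mpow n R :: nat \<Rightarrow> (nat, 'k) mpoly set) = wfilt n R w"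
    using mpow_eq_wfilt[OF po ic w] by blast
  let ?G = "gr_ring (wfilt n R w) :: (nat \<Rightarrow> (nat, 'k) mpoly set) ring"
  let ?h = "gr_to_R_P n R w :: (nat \<Rightarrow> (nat, 'k) mpoly set) \<Rightarrow> (nat, 'k) mpoly"
  have carrier: "carrier (R_P_ring n R :: (nat, 'k) mpoly ring) = wfilt n R w 0"
    unfolding R_P_ring_def R_P_eq_wfilt_0[OF po ic w] by simp
  have "?h \<in> ring_hom ?G (R_P_ring n R)"
    unfolding ring_hom_def carrier
    using gr_to_R_P_in_wfilt gr_to_R_P_mult gr_to_R_P_add gr_to_R_P_gr_const[of n R w 1]
    by (auto simp: R_P_ring_def gr_one_eq pconst_def)
  moreover have "inj_on ?h (carrier ?G)" by (rule inj_onI) (rule gr_to_R_P_inj)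
  moreover have "?h ` carrier ?G = carrier (R_P_ring n R)"
    unfolding carrier using gr_to_R_P_in_wfilt gr_to_R_P_surj[where 'k='k] by blast
  ultimately have "?h \<in> ring_iso ?G (R_P_ring n R)" unfolding ring_iso_def bij_betw_def by blast
  then show ?thesis unfolding gr_iso_R_P_def grR_P_def filt using gr_to_R_P_gr_const by blast
qed

theorem corollary6p5:
  fixes n :: nat and R :: "nat rel"
  assumes "partial_order_on {1..n} R"
  shows "(((I_gr_P n R :: (nat set, 'k::field) mpoly set) = I_P n R \<and> gr_iso_R_P n R TYPE('k))
            \<longleftrightarrow> homogeneous_ideal (I_P n R :: (nat set, 'k) mpoly set))
       \<and> (homogeneous_ideal (I_P n R :: (nat set, 'k) mpoly set)
            \<longleftrightarrow> (\<forall>J1 J2. {J1, J2} \<in> Pi_pairs n R \<longrightarrow> hasse_connected R (J1 \<inter> J2)))"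
proof -
  have ii_iii: "homogeneous_ideal (I_P n R :: (nat set, 'k) mpoly set) \<longleftrightarrow> intersections_connected n R"
    using intersections_connected_if_homogeneous[OF assms] homogeneous_if_intersections_connected[OF assms]
    by blast
  have "((I_gr_P n R :: (nat set, 'k) mpoly set) = I_P n R \<and> gr_iso_R_P n R TYPE('k))
      \<longleftrightarrow> homogeneous_ideal (I_P n R :: (nat set, 'k) mpoly set)"
    using homogeneous_I_gr_P[where 'k='k, of n R] I_gr_P_eq_I_P[OF assms, where 'k='k]
      gr_iso_if_intersections_connected[OF assms, where 'k='k] ii_iii
    by metis
  then show ?thesis using ii_iii intersections_connected_iff_Pi_pairs by blast
qed

end
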